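(* Every matroid in $\mathcal{D}$ is an excluded minor for $\mathcal{Z}$ and is an excluded minor for $\mathcal{R}$.
   Context: Relaxing a circuit-hyperplane $H$ of $M$ means forming the matroid on $E(M)$ whose bases are the bases of $M$ together with $H$. $\mathcal{D}$ is the collection of all matroids obtained from a connected binary matroid $M$ having two disjoint circuit-hyperplanes $X,Y$ with $X\cup Y=E(M)$ by relaxing both $X$ and $Y$ (the matroid on $E(M)$ whose bases are the bases of $M$ together with $X$ and $Y$). $\mathcal{Z}$ is the class of matroids $M$ such that for every $e\in E(M)$, $M\backslash e$ or $M/e$ is binary. $\mathcal{R}$ is the class of matroids that are binary or can be obtained from a binary matroid by relaxing a circuit-hyperplane. An excluded minor for a minor-closed class is a matroid not in the class all of whose proper minors are in the class. *)

theory Defs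
  imports Main "HOL-Library.Z2"
begin

type_synonym 'a matroid = "'a set \<times> 'a set set"

definition gnd :: "'a matroid \<Rightarrow> 'a set" where "gnd M = fst M"
definition bases :: "'a matroid \<Rightarrow> 'a set set" where "bases M = snd M"

definition matroid :: "'a matroid \<Rightarrow> bool" where
  "matroid M \<longleftrightarrow> finite (gnd M) \<and> bases M \<noteq> {} \<and> (\<forall>B\<in>bases M. B \<subseteq> gnd M) \<and>
     (\<forall>B1\<in>bases M. \<forall>B2\<in>bases M. \<forall>x\<in>B1 - B2. \<exists>y\<in>B2 - B1. insert y (B1 - {x}) \<in> bases M)"

definition indep :: "'a matroid \<Rightarrow> 'a set \<Rightarrow> bool" where
  "indep M X \<longleftrightarrow> (\<exists>B\<in>bases M. X \<subseteq> B)"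

definition circuit :: "'a matroid \<Rightarrow> 'a set \<Rightarrow> bool" where
  "circuit M C \<longleftrightarrow> C \<subseteq> gnd M \<and> \<not> indep M C \<and> (\<forall>x\<in>C. indep M (C - {x}))"

definition rk :: "'a matroid \<Rightarrow> 'a set \<Rightarrow> nat" where
  "rk M X = Max (card ` {I. I \<subseteq> X \<and> indep M I})"

definition flat :: "'a matroid \<Rightarrow> 'a set \<Rightarrow> bool" where
  "flat M F \<longleftrightarrow> F \<subseteq> gnd M \<and> (\<forall>x\<in>gnd M - F. rk M (insert x F) > rk M F)"

definition hyperplane :: "'a matroid \<Rightarrow> 'a set \<Rightarrow> bool" where
  "hyperplane M H \<longleftrightarrow> flat M H \<and> rk M H + 1 = rk M (gnd M)"

definition circuit_hyperplane :: "'a matroid \<Rightarrow> 'a set \<Rightarrow> bool" where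
  "circuit_hyperplane M H \<longleftrightarrow> circuit M H \<and> hyperplane M H"

definition connected_matroid :: "'a matroid \<Rightarrow> bool" where
  "connected_matroid M \<longleftrightarrow>
     (\<forall>x\<in>gnd M. \<forall>y\<in>gnd M. x \<noteq> y \<longrightarrow> (\<exists>C. circuit M C \<and> x \<in> C \<and> y \<in> C))"

definition gf2_indep :: "('a \<Rightarrow> nat \<Rightarrow> bit) \<Rightarrow> 'a set \<Rightarrow> bool" where
  "gf2_indep f X \<longleftrightarrow>
     (\<forall>c :: 'a \<Rightarrow> bit. (\<forall>i. (\<Sum>x\<in>X. c x * f x i) = 0) \<longrightarrow> (\<forall>x\<in>X. c x = 0))"

definition binary :: "'a matroid \<Rightarrow> bool" where
  "binary M \<longleftrightarrow> (\<exists>f :: 'a \<Rightarrow> nat \<Rightarrow> bit. \<forall>X \<subseteq> gnd M. indep M X \<longleftrightarrow> gf2_indep f X)"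

definition restrict :: "'a matroid \<Rightarrow> 'a set \<Rightarrow> 'a matroid" where
  "restrict M S = (S, {B. B \<subseteq> S \<and> indep M B \<and>
                         (\<forall>B'. B \<subseteq> B' \<and> B' \<subseteq> S \<and> indep M B' \<longrightarrow> B' = B)})"

definition delete :: "'a matroid \<Rightarrow> 'a \<Rightarrow> 'a matroid" where
  "delete M e = restrict M (gnd M - {e})"

definition contract :: "'a matroid \<Rightarrow> 'a set \<Rightarrow> 'a matroid" where
  "contract M C = (gnd M - C, {X. X \<subseteq> gnd M - C \<and>
       (\<exists>BC. BC \<in> bases (restrict M C) \<and> X \<union> BC \<in> bases M)})"

definition minor :: "'a matroid \<Rightarrow> 'a matroid \<Rightarrow> bool" where
  "minor N M \<longleftrightarrow> (\<exists>C D. C \<subseteq> gnd M \<and> D \<subseteq> gnd M \<and> C \<inter> D = {} \<and>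
                      N = restrict (contract M C) (gnd M - C - D))"

definition proper_minor :: "'a matroid \<Rightarrow> 'a matroid \<Rightarrow> bool" where
  "proper_minor N M \<longleftrightarrow> (\<exists>C D. C \<subseteq> gnd M \<and> D \<subseteq> gnd M \<and> C \<inter> D = {} \<and> C \<union> D \<noteq> {} \<and>
                      N = restrict (contract M C) (gnd M - C - D))"

definition excluded_minor :: "('a matroid \<Rightarrow> bool) \<Rightarrow> 'a matroid \<Rightarrow> bool" where
  "excluded_minor P M \<longleftrightarrow> matroid M \<and> \<not> P M \<and> (\<forall>N. proper_minor N M \<longrightarrow> P N)"

definition relax :: "'a matroid \<Rightarrow> 'a set \<Rightarrow> 'a matroid" where
  "relax M H = (gnd M, bases M \<union> {H})"

definition classZ :: "'a matroid \<Rightarrow> bool" where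
  "classZ M \<longleftrightarrow> (\<forall>e\<in>gnd M. binary (delete M e) \<or> binary (contract M {e}))"

definition classR :: "'a matroid \<Rightarrow> bool" where
  "classR M \<longleftrightarrow> binary M \<or>
     (\<exists>N H. matroid N \<and> binary N \<and> circuit_hyperplane N H \<and> M = relax N H)"

definition classD :: "'a matroid \<Rightarrow> bool" where
  "classD M \<longleftrightarrow> (\<exists>N X Y. matroid N \<and> binary N \<and> connected_matroid N \<and>
       circuit_hyperplane N X \<and> circuit_hyperplane N Y \<and> X \<inter> Y = {} \<and> X \<union> Y = gnd N \<and>
       M = relax (relax N X) Y)"

end

theory Submission
  imports Defs
begin

text \<open>Write \<open>M\<close> for \<open>N\<close> with the complementary circuit-hyperplanes \<open>X\<close>, \<open>Y\<close> relaxed; its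
  bases are those of \<open>N\<close> together with \<open>X\<close> and \<open>Y\<close>. Connectivity of \<open>N\<close> forces
  \<open>|X| = |Y| \<ge> 3\<close>.

  \<open>M\<close> is far from binary: with respect to the basis \<open>X\<close>, every \<open>y \<in> Y\<close> has fundamental
  circuit \<open>X + y\<close>, so in a GF(2)-representation all elements of \<open>Y\<close> get the vector
  \<open>\<Sum>X\<close> and are parallel, although any two of them are independent. For \<open>e \<in> X\<close> the same
  configuration persists after deleting \<open>e\<close> (basis \<open>Y\<close>) or contracting \<open>e\<close> (basis \<open>X - e\<close>),
  and in every \<open>N'\<close> whose relaxation at some \<open>H\<close> is \<open>M\<close>, for the side \<open>X\<close> or \<open>Y\<close> chosen
  away from \<open>H\<close>.

  Conversely, a proper minor of \<open>M\<close> is obtained by contracting a basis \<open>K\<close> of some set \<open>C\<close>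
  and restricting to a set \<open>S\<close>. Unless some \<open>P \<in> {X, Y}\<close> satisfies \<open>K \<subset> P \<subseteq> K \<union> S\<close>, this
  agrees with the binary minor \<open>N / K | S\<close>; otherwise \<open>P - K\<close> is either all of \<open>S\<close> (a free
  matroid) or a circuit-hyperplane of \<open>N / K | S\<close> whose relaxation is the minor. For
  \<open>e \<in> S\<close>, deleting or contracting \<open>e\<close> leaves no such \<open>P\<close>.\<close>

section \<open>Binary representations\<close>

text \<open>Keep GF(2) arithmetic in ring form rather than as xor/and.\<close>

declare add_bit_eq_xor[simp del] mult_bit_eq_and[simp del]

lemma bit_add_self [simp]: "(a::bit) + a = 0"
  by (metis diff_self minus_bit_def)

lemma bit_add_eq_0_iff: "(a::bit) + b = 0 \<longleftrightarrow> a = b"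
  by (metis bit_add_self diff_add_cancel minus_bit_def)

definition gf2_representable :: "'a set \<Rightarrow> ('a set \<Rightarrow> bool) \<Rightarrow> bool" where
  "gf2_representable T P \<longleftrightarrow> (\<exists>g. \<forall>I\<subseteq>T. P I \<longleftrightarrow> gf2_indep g I)"

lemma binary_iff_gf2_representable: "binary M \<longleftrightarrow> gf2_representable (gnd M) (indep M)"
  unfolding binary_def gf2_representable_def by blast

lemma binary_iff_representable_on:
  "(\<And>I. I \<subseteq> gnd M \<Longrightarrow> indep M I \<longleftrightarrow> P I) \<Longrightarrow> binary M \<longleftrightarrow> gf2_representable (gnd M) P"
  unfolding binary_iff_gf2_representable gf2_representable_def by (metis (no_types, lifting))

lemma binaryI:
  assumes "gnd M = T" "gf2_representable T P" "\<And>I. I \<subseteq> T \<Longrightarrow> indep M I \<longleftrightarrow> P I"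
  shows "binary M"
  using binary_iff_representable_on[of M P] assms by simp

lemma gf2_representable_mono:
  "gf2_representable T P \<Longrightarrow> T' \<subseteq> T \<Longrightarrow> gf2_representable T' P"
  unfolding gf2_representable_def by (meson order_trans)

lemma gf2_representable_cong:
  "gf2_representable T P \<Longrightarrow> (\<And>I. I \<subseteq> T \<Longrightarrow> P I \<longleftrightarrow> Q I) \<Longrightarrow> gf2_representable T Q"
  unfolding gf2_representable_def by metis

lemma gf2_indep_subset:
  assumes "finite X" "gf2_indep f X" "A \<subseteq> X"
  shows "gf2_indep f A"
  unfolding gf2_indep_def
proof (intro allI impI)
  fix c :: "'a \<Rightarrow> bit"
  assume c: "\<forall>i. (\<Sum>x\<in>A. c x * f x i) = 0"
  define c' where "c' = (\<lambda>x. if x \<in> A then c x else 0)"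
  have "(\<Sum>x\<in>X. c' x * f x i) = 0" for i
  proof -
    have "(\<Sum>x\<in>X. c' x * f x i) = (\<Sum>x\<in>A. c' x * f x i)"
      by (rule sum.mono_neutral_right) (use assms in \<open>auto simp: c'_def\<close>)
    also have "\<dots> = (\<Sum>x\<in>A. c x * f x i)" by (rule sum.cong) (auto simp: c'_def)
    finally show ?thesis using c by simp
  qed
  then have "\<forall>x\<in>X. c' x = 0" using assms(2) unfolding gf2_indep_def by blast
  then show "\<forall>x\<in>A. c x = 0" using assms(3) unfolding c'_def by (metis subsetD)
qed

lemma gf2_indep_singleton_nonzero:
  assumes "gf2_indep g {e}"
  obtains i where "g e i = 1"
proof -
  have "\<not> (\<forall>i. g e i = 0)"
  proof
    assume "\<forall>i. g e i = 0"
    then have "\<forall>i. (\<Sum>x\<in>{e}. (\<lambda>_. 1::bit) x * g x i) = 0" by simp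
    moreover have "(\<forall>i. (\<Sum>x\<in>{e}. (\<lambda>_. 1::bit) x * g x i) = 0) \<longrightarrow> (\<forall>x\<in>{e}. (\<lambda>_. 1::bit) x = 0)"
      using assms unfolding gf2_indep_def by (rule spec)
    ultimately show False by simp
  qed
  then show ?thesis using that by (metis bit_not_zero_iff)
qed

text \<open>All coefficients of a dependency of a minimal dependent set are nonzero.\<close>

lemma gf2_minimal_dependent_sum_eq_0:
  assumes "finite A" "\<not> gf2_indep g A" "\<forall>a\<in>A. gf2_indep g (A - {a})"
  shows "(\<Sum>a\<in>A. g a i) = 0"
proof -
  obtain c where c: "\<forall>i. (\<Sum>x\<in>A. c x * g x i) = 0" and nz: "\<exists>x\<in>A. c x \<noteq> 0"
    using assms(2) unfolding gf2_indep_def by blast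
  have "c a = 1" if a: "a \<in> A" for a
  proof (rule ccontr)
    assume "c a \<noteq> 1"
    then have "c a = 0" by simp
    then have "\<forall>i. (\<Sum>x\<in>A - {a}. c x * g x i) = 0"
      using c a assms(1) by (simp add: sum.remove)
    then have "\<forall>x\<in>A - {a}. c x = 0" using assms(3) a unfolding gf2_indep_def by blast
    then show False using nz \<open>c a = 0\<close> by blast
  qed
  then have "(\<Sum>x\<in>A. c x * g x i) = (\<Sum>a\<in>A. g a i)" by simp
  then show ?thesis using c by simp
qed

lemma gf2_representable_empty_only:
  assumes "finite T"
  shows "gf2_representable T (\<lambda>I. I = {})"
  unfolding gf2_representable_def
proof (intro exI allI impI)
  fix I assume "I \<subseteq> T"
  then have "finite I" using assms finite_subset by blast
  have "gf2_indep (\<lambda>_ _. 0) I \<Longrightarrow> I = {}"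
    unfolding gf2_indep_def by (erule allE[of _ "\<lambda>_. 1"]) auto
  then show "I = {} \<longleftrightarrow> gf2_indep (\<lambda>_ _. 0) I" by (auto simp: gf2_indep_def)
qed

lemma gf2_representable_free:
  assumes "finite T"
  shows "gf2_representable T (\<lambda>_. True)"
proof -
  obtain h :: "'a \<Rightarrow> nat" where inj: "inj_on h T"
    using assms finite_imp_inj_to_nat_seg by blast
  define f where "f = (\<lambda>x i. if h x = i then (1::bit) else 0)"
  have "gf2_indep f I" if I: "I \<subseteq> T" for I
    unfolding gf2_indep_def
  proof (intro allI impI ballI)
    fix c :: "'a \<Rightarrow> bit" and x
    assume c: "\<forall>i. (\<Sum>y\<in>I. c y * f y i) = 0" and x: "x \<in> I"
    have "finite I" using I assms finite_subset by blast
    then have "(\<Sum>y\<in>I. c y * f y (h x)) = (\<Sum>y\<in>{x}. c y * f y (h x))"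
      by (rule sum.mono_neutral_right) (use x inj I in \<open>auto simp: f_def inj_on_def\<close>)
    then show "c x = 0" using c by (simp add: f_def)
  qed
  then show ?thesis unfolding gf2_representable_def by blast
qed

text \<open>Contracting the vector \<open>g e\<close>: project along \<open>g e\<close> onto the hyperplane of a coordinate
  \<open>i0\<close> where \<open>g e\<close> is nonzero.\<close>

definition gf2_project :: "('a \<Rightarrow> nat \<Rightarrow> bit) \<Rightarrow> 'a \<Rightarrow> nat \<Rightarrow> 'a \<Rightarrow> nat \<Rightarrow> bit" where
  "gf2_project g e i0 x i = g x i + g x i0 * g e i"

lemma gf2_project_sum:
  "(\<Sum>x\<in>I. c x * gf2_project g e i0 x i) = (\<Sum>x\<in>I. c x * g x i) + (\<Sum>x\<in>I. c x * g x i0) * g e i"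
  by (simp add: gf2_project_def distrib_left sum.distrib sum_distrib_right mult.assoc)

lemma gf2_indep_insert_if_project:
  assumes i0: "g e i0 = 1" and I: "finite I" "e \<notin> I" and indep: "gf2_indep (gf2_project g e i0) I"
  shows "gf2_indep g (insert e I)"
  unfolding gf2_indep_def
proof (intro allI impI)
  fix c :: "'a \<Rightarrow> bit"
  assume "\<forall>i. (\<Sum>x\<in>insert e I. c x * g x i) = 0"
  then have c: "c e * g e i + (\<Sum>x\<in>I. c x * g x i) = 0" for i
    using I by simp
  have ce: "(\<Sum>x\<in>I. c x * g x i0) = c e"
    using c[of i0] i0 by (simp add: bit_add_eq_0_iff)
  have "\<forall>i. (\<Sum>x\<in>I. c x * gf2_project g e i0 x i) = 0"
    using c by (simp add: gf2_project_sum ce add.commute)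
  then have "\<forall>x\<in>I. c x = 0" using indep unfolding gf2_indep_def by blast
  moreover from this have "c e = 0" using ce by simp
  ultimately show "\<forall>x\<in>insert e I. c x = 0" by simp
qed

lemma gf2_indep_project_if_insert:
  assumes I: "finite I" "e \<notin> I" and indep: "gf2_indep g (insert e I)"
  shows "gf2_indep (gf2_project g e i0) I"
  unfolding gf2_indep_def
proof (intro allI impI)
  fix c :: "'a \<Rightarrow> bit"
  assume c: "\<forall>i. (\<Sum>x\<in>I. c x * gf2_project g e i0 x i) = 0"
  define c' where "c' = c(e := (\<Sum>x\<in>I. c x * g x i0))"
  have "(\<Sum>x\<in>I. c' x * g x i) = (\<Sum>x\<in>I. c x * g x i)" for i
    using I(2) by (intro sum.cong) (auto simp: c'_def)
  then have "\<forall>i. (\<Sum>x\<in>insert e I. c' x * g x i) = 0"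
    using c I by (simp add: gf2_project_sum c'_def add.commute)
  then have "\<forall>x\<in>insert e I. c' x = 0" using indep unfolding gf2_indep_def by blast
  then show "\<forall>x\<in>I. c x = 0" using I(2) by (auto simp: c'_def split: if_splits)
qed

lemma gf2_indep_contract_singleton:
  assumes "gf2_indep g {e}"
  shows "\<exists>g'. \<forall>I. finite I \<longrightarrow> e \<notin> I \<longrightarrow> (gf2_indep g' I \<longleftrightarrow> gf2_indep g (insert e I))"
proof -
  obtain i0 where i0: "g e i0 = 1" using gf2_indep_singleton_nonzero[OF assms] .
  show ?thesis
  proof (intro exI allI impI iffI)
    fix I :: "'a set" assume "finite I" "e \<notin> I"
    then show "gf2_indep (gf2_project g e i0) I \<Longrightarrow> gf2_indep g (insert e I)"
      and "gf2_indep g (insert e I) \<Longrightarrow> gf2_indep (gf2_project g e i0) I"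
      using gf2_indep_insert_if_project[of g e i0 I, OF i0] gf2_indep_project_if_insert[of I e g i0]
      by blast+
  qed
qed

lemma gf2_indep_contract:
  assumes "finite K" "gf2_indep g K"
  shows "\<exists>g'. \<forall>I. finite I \<longrightarrow> I \<inter> K = {} \<longrightarrow> (gf2_indep g' I \<longleftrightarrow> gf2_indep g (I \<union> K))"
  using assms
proof (induction K rule: finite_induct)
  case empty
  show ?case by auto
next
  case (insert e K)
  have "gf2_indep g K" using gf2_indep_subset[OF _ insert.prems] insert.hyps by blast
  then obtain g1 where g1: "\<forall>I. finite I \<longrightarrow> I \<inter> K = {} \<longrightarrow> (gf2_indep g1 I \<longleftrightarrow> gf2_indep g (I \<union> K))"
    by (rule insert.IH[THEN exE])
  have "gf2_indep g1 {e} \<longleftrightarrow> gf2_indep g ({e} \<union> K)"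
    using g1[rule_format, of "{e}"] insert.hyps by simp
  then have "gf2_indep g1 {e}" using insert.prems by simp
  then obtain g2 where g2: "\<forall>I. finite I \<longrightarrow> e \<notin> I \<longrightarrow> (gf2_indep g2 I \<longleftrightarrow> gf2_indep g1 (insert e I))"
    by (blast dest: gf2_indep_contract_singleton)
  have "gf2_indep g2 I \<longleftrightarrow> gf2_indep g (I \<union> insert e K)" if "finite I" "I \<inter> insert e K = {}" for I
    using that g1[rule_format, of "insert e I"] g2[rule_format, of I] insert.hyps by simp
  then show ?case by blast
qed

lemma gf2_representable_contract:
  assumes rep: "gf2_representable T P" and fin: "finite T" and K: "K \<subseteq> T" "P K"
  shows "gf2_representable (T - K) (\<lambda>I. P (I \<union> K))"
proof -
  obtain g where g: "\<forall>I\<subseteq>T. P I \<longleftrightarrow> gf2_indep g I" using rep unfolding gf2_representable_def by blast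
  have "finite K" using fin K finite_subset by blast
  moreover have "gf2_indep g K" by (rule g[rule_format, THEN iffD1]) (use K in auto)
  ultimately obtain g' where g': "\<forall>I. finite I \<longrightarrow> I \<inter> K = {} \<longrightarrow> (gf2_indep g' I \<longleftrightarrow> gf2_indep g (I \<union> K))"
    by (blast dest: gf2_indep_contract)
  have "P (I \<union> K) \<longleftrightarrow> gf2_indep g' I" if I: "I \<subseteq> T - K" for I
  proof -
    have "P (I \<union> K) \<longleftrightarrow> gf2_indep g (I \<union> K)" by (rule g[rule_format]) (use I K in blast)
    also have "\<dots> \<longleftrightarrow> gf2_indep g' I"
    proof -
      have "finite I" "I \<inter> K = {}" using I fin finite_subset[of I T] by auto
      then show ?thesis using g' by simp
    qed
    finally show ?thesis .
  qed
  then show ?thesis unfolding gf2_representable_def by blast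
qed

lemma gf2_fundamental_circuit_sum:
  assumes "finite B" "x \<notin> B" "gf2_indep g B"
    and "\<forall>y\<in>B. gf2_indep g (insert x (B - {y}))" "\<not> gf2_indep g (insert x B)"
  shows "g x i = (\<Sum>b\<in>B. g b i)"
proof -
  have "gf2_indep g (insert x B - {a})" if "a \<in> insert x B" for a
  proof (cases "a = x")
    case True
    then show ?thesis using assms(2,3) by simp
  next
    case False
    then have "insert x B - {a} = insert x (B - {a})" by blast
    then show ?thesis using False that assms(4) by simp
  qed
  then have "(\<Sum>a\<in>insert x B. g a i) = 0"
    using assms(1,5) by (intro gf2_minimal_dependent_sum_eq_0) auto
  then show ?thesis using assms(1,2) by (simp add: bit_add_eq_0_iff)
qed

text \<open>Both \<open>x1\<close> and \<open>x2\<close> get the vector \<open>\<Sum>b\<in>B. g b\<close>.\<close>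

lemma gf2_representable_fundamental_circuits_parallel:
  assumes rep: "gf2_representable T P" and fin: "finite T"
    and B: "B \<subseteq> T" "P B"
    and x: "x1 \<in> T - B" "x2 \<in> T - B" "x1 \<noteq> x2"
    and exch1: "\<forall>y\<in>B. P (insert x1 (B - {y}))" and dep1: "\<not> P (insert x1 B)"
    and exch2: "\<forall>y\<in>B. P (insert x2 (B - {y}))" and dep2: "\<not> P (insert x2 B)"
  shows "\<not> P {x1, x2}"
proof
  obtain g where g: "\<And>I. I \<subseteq> T \<Longrightarrow> P I \<longleftrightarrow> gf2_indep g I"
    using rep unfolding gf2_representable_def by blast
  have finB: "finite B" using B fin finite_subset by blast
  have "g x i = (\<Sum>b\<in>B. g b i)"
    if x: "x \<in> T - B" and exch: "\<forall>y\<in>B. P (insert x (B - {y}))" and dep: "\<not> P (insert x B)" for x i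
  proof (rule gf2_fundamental_circuit_sum[OF finB])
    have xB: "insert x B \<subseteq> T" using B x by blast
    show "x \<notin> B" using x by blast
    show "gf2_indep g B" using g[OF B(1)] B(2) by simp
    show "\<forall>y\<in>B. gf2_indep g (insert x (B - {y}))"
      using exch g[of "insert x (B - {y})" for y] xB by blast
    show "\<not> gf2_indep g (insert x B)" using dep g[OF xB] by simp
  qed
  then have "g x1 i = g x2 i" for i using x exch1 dep1 exch2 dep2 by simp
  then have "\<forall>i. (\<Sum>x\<in>{x1, x2}. (\<lambda>_. 1::bit) x * g x i) = 0" using x(3) by simp
  moreover assume "P {x1, x2}"
  then have "gf2_indep g {x1, x2}" using g[of "{x1, x2}"] x by simp
  then have "(\<forall>i. (\<Sum>x\<in>{x1, x2}. (\<lambda>_. 1::bit) x * g x i) = 0) \<longrightarrow> (\<forall>x\<in>{x1, x2}. (\<lambda>_. 1::bit) x = 0)"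
    unfolding gf2_indep_def by (rule spec)
  ultimately have "\<forall>x\<in>{x1, x2}. (\<lambda>_. 1::bit) x = 0" by (rule rev_mp)
  then have "(1::bit) = 0" by blast
  then show False by simp
qed

section \<open>Bases, independence and augmentation\<close>

lemma card_insert_Diff_singleton:
  assumes "finite A" "x \<in> A" "y \<notin> A - {x}"
  shows "card (insert y (A - {x})) = card A"
proof -
  have "card A > 0" using assms(1,2) card_gt_0_iff by blast
  then show ?thesis using assms by (cases "y = x") (auto simp: insert_absorb card_Diff_singleton)
qed

lemma card_ge_2_obtain:
  assumes "2 \<le> card S"
  obtains x y where "x \<in> S" "y \<in> S" "x \<noteq> y"
proof -
  obtain T where "T \<subseteq> S" "card T = 2" using obtain_subset_with_card_n[OF assms] by metis
  then show ?thesis using that card_2_iff by (metis insert_subset)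
qed

lemma card_ge_3_obtain:
  assumes "3 \<le> card S"
  obtains x y z where "x \<in> S" "y \<in> S" "z \<in> S" "x \<noteq> y" "x \<noteq> z" "y \<noteq> z"
proof -
  obtain T where "T \<subseteq> S" "card T = 3" using obtain_subset_with_card_n[OF assms] by metis
  then show ?thesis using that card_3_iff by (metis insert_subset)
qed

lemma matroid_finite_gnd: "matroid M \<Longrightarrow> finite (gnd M)"
  by (simp add: matroid_def)

lemma matroid_basis_subset: "matroid M \<Longrightarrow> B \<in> bases M \<Longrightarrow> B \<subseteq> gnd M"
  by (simp add: matroid_def)

lemma matroid_bases_nonempty: "matroid M \<Longrightarrow> bases M \<noteq> {}"
  by (simp add: matroid_def)

lemma matroid_basis_exchange:
  "matroid M \<Longrightarrow> B1 \<in> bases M \<Longrightarrow> B2 \<in> bases M \<Longrightarrow> x \<in> B1 - B2 \<Longrightarrow>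
   \<exists>y\<in>B2 - B1. insert y (B1 - {x}) \<in> bases M"
  unfolding matroid_def by blast

lemma indep_subset: "indep M I \<Longrightarrow> J \<subseteq> I \<Longrightarrow> indep M J"
  unfolding indep_def by blast

lemma basis_indep: "B \<in> bases M \<Longrightarrow> indep M B"
  unfolding indep_def by blast

lemma indep_subset_gnd: "matroid M \<Longrightarrow> indep M I \<Longrightarrow> I \<subseteq> gnd M"
  unfolding indep_def using matroid_basis_subset by blast

lemma indep_empty: "matroid M \<Longrightarrow> indep M {}"
  unfolding indep_def using matroid_bases_nonempty by blast

lemma indep_finite: "matroid M \<Longrightarrow> indep M I \<Longrightarrow> finite I"
  using indep_subset_gnd matroid_finite_gnd finite_subset by blast

lemma bases_card_le:
  assumes M: "matroid M" and B1: "B1 \<in> bases M" and B2: "B2 \<in> bases M"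
  shows "card B1 \<le> card B2"
  using B1
proof (induction "card (B1 - B2)" arbitrary: B1 rule: less_induct)
  case less
  have fin: "finite B1" "finite B2" using indep_finite[OF M] basis_indep less.prems B2 by blast+
  show ?case
  proof (cases "B1 \<subseteq> B2")
    case True
    then show ?thesis using card_mono fin by blast
  next
    case False
    then obtain x where x: "x \<in> B1 - B2" by blast
    obtain y where y: "y \<in> B2 - B1" and B1': "insert y (B1 - {x}) \<in> bases M"
      using matroid_basis_exchange[OF M less.prems B2 x] by blast
    have eq: "insert y (B1 - {x}) - B2 = (B1 - B2) - {x}" using y by blast
    have "card ((B1 - B2) - {x}) < card (B1 - B2)" using x fin(1) by (intro card_Diff1_less) auto
    then have "card (insert y (B1 - {x}) - B2) < card (B1 - B2)" unfolding eq .
    then have "card (insert y (B1 - {x})) \<le> card B2" using less.hyps B1' by blast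
    then show ?thesis using card_insert_Diff_singleton[OF fin(1)] x y by simp
  qed
qed

lemma bases_card_eq: "matroid M \<Longrightarrow> B1 \<in> bases M \<Longrightarrow> B2 \<in> bases M \<Longrightarrow> card B1 = card B2"
  using bases_card_le le_antisym by blast

lemma indep_card_le_basis:
  assumes M: "matroid M" and I: "indep M I" and B: "B \<in> bases M"
  shows "card I \<le> card B"
proof -
  obtain B' where B': "B' \<in> bases M" "I \<subseteq> B'" using I unfolding indep_def by blast
  then have "card I \<le> card B'" using indep_finite[OF M basis_indep] card_mono by blast
  also have "\<dots> = card B" using bases_card_eq[OF M B'(1) B] .
  finally show ?thesis .
qed

lemma indep_card_eq_basis:
  assumes M: "matroid M" and I: "indep M I" and B: "B \<in> bases M" and card: "card I = card B"
  shows "I \<in> bases M"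
proof -
  obtain B' where B': "B' \<in> bases M" "I \<subseteq> B'" using I unfolding indep_def by blast
  have "card B' = card B" using bases_card_eq[OF M B'(1) B] .
  then have "I = B'" using card_subset_eq[OF indep_finite[OF M basis_indep[OF B'(1)]] B'(2)] card by simp
  then show ?thesis using B'(1) by simp
qed

text \<open>Exchanging the elements of a basis outside \<open>I \<union> B\<close> one at a time into \<open>B\<close>.\<close>

lemma ex_basis_between:
  assumes M: "matroid M" and I: "indep M I" and B: "B \<in> bases M"
  shows "\<exists>B'\<in>bases M. I \<subseteq> B' \<and> B' \<subseteq> I \<union> B"
proof -
  define excess where "excess B' = card (B' - (I \<union> B))" for B'
  obtain B0 where "B0 \<in> bases M" "I \<subseteq> B0" using I unfolding indep_def by blast
  then obtain B' where B': "B' \<in> bases M" "I \<subseteq> B'"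
    and least: "\<And>B''. B'' \<in> bases M \<and> I \<subseteq> B'' \<Longrightarrow> excess B' \<le> excess B''"
    using ex_has_least_nat[of "\<lambda>B'. B' \<in> bases M \<and> I \<subseteq> B'" B0 excess] by blast
  have "B' \<subseteq> I \<union> B"
  proof (rule ccontr)
    assume "\<not> B' \<subseteq> I \<union> B"
    then obtain x where x: "x \<in> B' - (I \<union> B)" by blast
    obtain y where y: "y \<in> B - B'" and B'': "insert y (B' - {x}) \<in> bases M"
      using matroid_basis_exchange[OF M B'(1) B] x by blast
    have "I \<subseteq> insert y (B' - {x})" using B'(2) x by blast
    then have "excess B' \<le> excess (insert y (B' - {x}))" using least B'' by blast
    moreover have eq: "insert y (B' - {x}) - (I \<union> B) = (B' - (I \<union> B)) - {x}" using y by blast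
    moreover have "finite B'" using indep_finite[OF M basis_indep[OF B'(1)]] .
    then have "card ((B' - (I \<union> B)) - {x}) < card (B' - (I \<union> B))"
      using x by (intro card_Diff1_less) auto
    ultimately show False unfolding excess_def by simp
  qed
  then show ?thesis using B' by blast
qed

lemma indep_augment:
  assumes M: "matroid M" and I1: "indep M I1" and I2: "indep M I2" and less: "card I1 < card I2"
  shows "\<exists>x\<in>I2 - I1. indep M (insert x I1)"
proof (rule ccontr)
  assume no_aug: "\<not> (\<exists>x\<in>I2 - I1. indep M (insert x I1))"
  obtain B2 where B2: "B2 \<in> bases M" "I2 \<subseteq> B2" using I2 unfolding indep_def by blast
  obtain B1 where B1: "B1 \<in> bases M" "I1 \<subseteq> B1" "B1 \<subseteq> I1 \<union> B2"
    using ex_basis_between[OF M I1 B2(1)] by blast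
  have "x \<notin> B1" if "x \<in> I2 - I1" for x
  proof
    assume "x \<in> B1"
    then have "indep M (insert x I1)" using B1(2) indep_subset[OF basis_indep[OF B1(1)]] by simp
    then show False using no_aug that by blast
  qed
  then have sub: "B1 \<subseteq> I1 \<union> (B2 - I2)" using B1(3) by blast
  have fin: "finite I1" "finite B2" using indep_finite[OF M] I1 basis_indep[OF B2(1)] by blast+
  have "card B1 \<le> card (I1 \<union> (B2 - I2))" using card_mono[OF _ sub] fin by simp
  also have "\<dots> \<le> card I1 + card (B2 - I2)" by (rule card_Un_le)
  also have "\<dots> = card I1 + (card B2 - card I2)"
    using card_Diff_subset[OF finite_subset[OF B2(2) fin(2)] B2(2)] by simp
  also have "\<dots> < card B2" using less card_mono[OF fin(2) B2(2)] by linarith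
  finally show False using bases_card_eq[OF M B1(1) B2(1)] by simp
qed

lemma indep_augment_to_card:
  assumes M: "matroid M"
  shows "indep M I \<Longrightarrow> indep M J \<Longrightarrow> card I + n = card J \<Longrightarrow>
         \<exists>K. I \<subseteq> K \<and> K \<subseteq> I \<union> J \<and> indep M K \<and> card K = card J"
proof (induction n arbitrary: I)
  case 0
  then show ?case by auto
next
  case (Suc n)
  then obtain x where x: "x \<in> J - I" "indep M (insert x I)"
    using indep_augment[OF M] by (metis add_Suc_right less_add_Suc1)
  then have "card (insert x I) + n = card J"
    using Suc.prems(3) indep_finite[OF M Suc.prems(1)] by simp
  then obtain K where "insert x I \<subseteq> K" "K \<subseteq> insert x I \<union> J" "indep M K" "card K = card J"
    using Suc.IH[OF x(2) Suc.prems(2)] by blast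
  then show ?case using x(1) by (intro exI[of _ K]) blast
qed

lemma gnd_bases_collapse: "(gnd M, bases M) = M"
  by (simp add: gnd_def bases_def)

section \<open>Restriction and contraction\<close>

lemma gnd_pair [simp]: "gnd (S, B) = S"
  by (simp add: gnd_def)

lemma bases_pair [simp]: "bases (S, B) = B"
  by (simp add: bases_def)

lemma gnd_restrict [simp]: "gnd (restrict M S) = S"
  by (simp add: restrict_def gnd_def)

lemma gnd_contract [simp]: "gnd (contract M C) = gnd M - C"
  by (simp add: contract_def gnd_def)

lemma gnd_delete [simp]: "gnd (delete M e) = gnd M - {e}"
  by (simp add: delete_def)

lemma gnd_relax [simp]: "gnd (relax M H) = gnd M"
  by (simp add: relax_def gnd_def)

lemma bases_relax [simp]: "bases (relax M H) = insert H (bases M)"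
  by (simp add: relax_def bases_def)

lemma bases_contract:
  "bases (contract M C) = {X. X \<subseteq> gnd M - C \<and> (\<exists>BC\<in>bases (restrict M C). X \<union> BC \<in> bases M)}"
  by (auto simp: contract_def bases_def)

definition maximal_sets :: "('a set \<Rightarrow> bool) \<Rightarrow> 'a set set" where
  "maximal_sets F = {B. F B \<and> (\<forall>J. F J \<and> B \<subseteq> J \<longrightarrow> J = B)}"

lemma bases_restrict: "bases (restrict M S) = maximal_sets (\<lambda>I. I \<subseteq> S \<and> indep M I)"
  by (auto simp: restrict_def bases_def maximal_sets_def)

lemma maximal_sets_ex_superset:
  assumes "finite S" "\<And>I. F I \<Longrightarrow> I \<subseteq> S" "F I"
  shows "\<exists>B\<in>maximal_sets F. I \<subseteq> B"
proof -
  have "Collect F \<subseteq> Pow S" using assms(2) by blast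
  then have "finite (Collect F)" using assms(1) finite_subset by blast
  then obtain B where "B \<in> Collect F" "I \<subseteq> B" "\<forall>J\<in>Collect F. B \<subseteq> J \<longrightarrow> B = J"
    using finite_has_maximal2[of "Collect F" I] assms(3) by blast
  then show ?thesis unfolding maximal_sets_def by auto
qed

lemma indep_maximal_sets_iff:
  assumes "finite S" "\<And>I. F I \<Longrightarrow> I \<subseteq> S" "\<And>I J. F I \<Longrightarrow> J \<subseteq> I \<Longrightarrow> F J"
  shows "indep (T, maximal_sets F) I \<longleftrightarrow> F I"
  using maximal_sets_ex_superset[OF assms(1,2)] assms(3)
  unfolding indep_def bases_def maximal_sets_def by auto

lemma restrict_indep_iff:
  assumes "finite S"
  shows "indep (restrict M S) I \<longleftrightarrow> I \<subseteq> S \<and> indep M I"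
proof -
  have "indep (restrict M S) I \<longleftrightarrow> indep (S, maximal_sets (\<lambda>I. I \<subseteq> S \<and> indep M I)) I"
    by (simp only: indep_def bases_restrict bases_pair)
  also have "\<dots> \<longleftrightarrow> I \<subseteq> S \<and> indep M I"
    using assms by (rule indep_maximal_sets_iff) (auto intro: indep_subset)
  finally show ?thesis .
qed

lemma indep_basis_restrict: "indep M C \<Longrightarrow> C \<in> bases (restrict M C)"
  by (auto simp: bases_restrict maximal_sets_def)

lemma basis_restrict_subset: "B \<in> bases (restrict M C) \<Longrightarrow> B \<subseteq> C"
  by (simp add: bases_restrict maximal_sets_def)

lemma basis_restrict_indep: "B \<in> bases (restrict M C) \<Longrightarrow> indep M B"
  by (simp add: bases_restrict maximal_sets_def)

definition indep_family :: "'a set \<Rightarrow> ('a set \<Rightarrow> bool) \<Rightarrow> bool" where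
  "indep_family S F \<longleftrightarrow> finite S \<and> (\<forall>I. F I \<longrightarrow> I \<subseteq> S) \<and> F {} \<and> (\<forall>I J. F I \<and> J \<subseteq> I \<longrightarrow> F J) \<and>
     (\<forall>I J. F I \<and> F J \<and> card I < card J \<longrightarrow> (\<exists>x\<in>J - I. F (insert x I)))"

lemma indep_family_indep_iff:
  assumes "indep_family S F"
  shows "indep (S, maximal_sets F) I \<longleftrightarrow> F I"
proof (rule indep_maximal_sets_iff[of S])
  show "finite S" "\<And>I. F I \<Longrightarrow> I \<subseteq> S" "\<And>I J. F I \<Longrightarrow> J \<subseteq> I \<Longrightarrow> F J"
    using assms unfolding indep_family_def by blast+
qed

lemma indep_family_ex_superset:
  assumes "indep_family S F" "F I"
  shows "\<exists>B\<in>maximal_sets F. I \<subseteq> B"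
proof (rule maximal_sets_ex_superset[of S])
  show "finite S" "\<And>I. F I \<Longrightarrow> I \<subseteq> S" "F I"
    using assms unfolding indep_family_def by blast+
qed

lemma maximal_sets_card_le:
  assumes fam: "indep_family S F" and B1: "B1 \<in> maximal_sets F" and B2: "B2 \<in> maximal_sets F"
  shows "card B1 \<le> card B2"
proof (rule ccontr)
  assume "\<not> card B1 \<le> card B2"
  moreover have "F B1" "F B2" using B1 B2 unfolding maximal_sets_def by simp_all
  ultimately obtain x where "x \<in> B1 - B2" "F (insert x B2)"
    using fam unfolding indep_family_def by (meson not_le)
  then show False using B2 unfolding maximal_sets_def by blast
qed

lemma matroid_maximal_sets:
  assumes fam: "indep_family S F"
  shows "matroid (S, maximal_sets F)"
proof -
  have fin: "finite S" and sub: "\<And>I. F I \<Longrightarrow> I \<subseteq> S" and hered: "\<And>I J. F I \<Longrightarrow> J \<subseteq> I \<Longrightarrow> F J"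
    and aug: "\<And>I J. F I \<Longrightarrow> F J \<Longrightarrow> card I < card J \<Longrightarrow> \<exists>x\<in>J - I. F (insert x I)"
    using fam unfolding indep_family_def by blast+
  have card_eq: "card B1 = card B2" if "B1 \<in> maximal_sets F" "B2 \<in> maximal_sets F" for B1 B2
    using maximal_sets_card_le[OF fam] that le_antisym by blast
  have "\<exists>y\<in>B2 - B1. insert y (B1 - {x}) \<in> maximal_sets F"
    if B1: "B1 \<in> maximal_sets F" and B2: "B2 \<in> maximal_sets F" and x: "x \<in> B1 - B2" for B1 B2 x
  proof -
    have FB: "F B1" "F B2" using B1 B2 unfolding maximal_sets_def by simp_all
    have finB1: "finite B1" using sub[OF FB(1)] fin finite_subset by blast
    have "card (B1 - {x}) < card B1" using finB1 x by (intro card_Diff1_less) auto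
    then have "card (B1 - {x}) < card B2" using card_eq[OF B1 B2] by linarith
    moreover have "F (B1 - {x})" using hered[OF FB(1)] by blast
    ultimately obtain y where y: "y \<in> B2 - (B1 - {x})" "F (insert y (B1 - {x}))"
      using aug FB(2) by blast
    obtain B3 where B3: "B3 \<in> maximal_sets F" "insert y (B1 - {x}) \<subseteq> B3"
      using indep_family_ex_superset[OF fam y(2)] by blast
    have "F B3" using B3(1) unfolding maximal_sets_def by simp
    then have "finite B3" using sub fin by (meson finite_subset)
    moreover have "card (insert y (B1 - {x})) = card B3"
      using card_insert_Diff_singleton[OF finB1] x y card_eq[OF B3(1) B1] by simp
    ultimately have "insert y (B1 - {x}) = B3" using card_subset_eq B3(2) by blast
    then show ?thesis using B3(1) y x by blast
  qed
  moreover have "maximal_sets F \<noteq> {}"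
  proof -
    have "F {}" using fam unfolding indep_family_def by blast
    then show ?thesis using indep_family_ex_superset[OF fam] by blast
  qed
  moreover have "\<forall>B\<in>maximal_sets F. B \<subseteq> S" using sub unfolding maximal_sets_def by blast
  ultimately show ?thesis unfolding matroid_def gnd_pair bases_pair using fin by blast
qed

lemma indep_family_contract:
  assumes M: "matroid M" and K: "indep M K" and S: "S \<subseteq> gnd M" "S \<inter> K = {}"
  shows "indep_family S (\<lambda>I. I \<subseteq> S \<and> indep M (I \<union> K))"
  unfolding indep_family_def
proof (intro conjI allI impI)
  have finS: "finite S" using S matroid_finite_gnd[OF M] finite_subset by blast
  then show "finite S" .
  have finK: "finite K" using indep_finite[OF M K] .
  have card_Un: "card (I \<union> K) = card I + card K" if "I \<subseteq> S" for I
    using that S(2) finS finK by (intro card_Un_disjoint) (auto intro: finite_subset)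
  show "\<exists>x\<in>J - I. insert x I \<subseteq> S \<and> indep M (insert x I \<union> K)"
    if IJ: "(I \<subseteq> S \<and> indep M (I \<union> K)) \<and> (J \<subseteq> S \<and> indep M (J \<union> K)) \<and> card I < card J" for I J
  proof -
    have "card (I \<union> K) < card (J \<union> K)" using IJ card_Un by simp
    then obtain x where x: "x \<in> (J \<union> K) - (I \<union> K)" "indep M (insert x (I \<union> K))"
      using indep_augment[OF M] IJ by blast
    then show ?thesis using IJ by auto
  qed
qed (use K in \<open>auto intro: indep_subset\<close>)

lemma restrict_eq_maximal_sets: "restrict M S = (S, maximal_sets (\<lambda>I. I \<subseteq> S \<and> indep M I))"
  by (metis bases_restrict gnd_bases_collapse gnd_restrict)

lemma matroid_restrict:
  assumes M: "matroid M" and S: "S \<subseteq> gnd M"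
  shows "matroid (restrict M S)"
proof -
  have "indep_family S (\<lambda>I. I \<subseteq> S \<and> indep M (I \<union> {}))"
    using indep_family_contract[OF M indep_empty[OF M] S] by simp
  then show ?thesis unfolding restrict_eq_maximal_sets by (simp add: matroid_maximal_sets)
qed

text \<open>The contraction \<open>M / C\<close> does not depend on the basis of \<open>C\<close> used to describe it.\<close>

lemma indep_Un_basis_restrict:
  assumes M: "matroid M" and C: "C \<subseteq> gnd M"
    and B0: "B0 \<in> bases (restrict M C)" and B1: "B1 \<in> bases (restrict M C)"
    and I: "I \<inter> C = {}" "indep M (I \<union> B1)"
  shows "indep M (I \<union> B0)"
proof -
  have B0C: "B0 \<subseteq> C" and B1C: "B1 \<subseteq> C" and indep_B0: "indep M B0"
    using B0 B1 basis_restrict_subset basis_restrict_indep by blast+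
  have card_B: "card B0 = card B1" using bases_card_eq[OF matroid_restrict[OF M C] B0 B1] .
  have finI: "finite I" and finB1: "finite B1" and finB0: "finite B0"
    using indep_finite[OF M] I(2) indep_B0 by auto
  have "I \<inter> B1 = {}" using I(1) B1C by blast
  then have card_IB1: "card (I \<union> B1) = card B0 + card I"
    using card_Un_disjoint[OF finI finB1] card_B by simp
  obtain K where K: "B0 \<subseteq> K" "K \<subseteq> B0 \<union> (I \<union> B1)" "indep M K" "card K = card (I \<union> B1)"
    using indep_augment_to_card[OF M indep_B0 I(2) card_IB1[symmetric]] by blast
  have "K \<inter> C \<subseteq> C \<and> indep M (K \<inter> C)" using indep_subset[OF K(3)] by blast
  then have KC: "K \<inter> C = B0"
    using B0 K(1) B0C unfolding bases_restrict maximal_sets_def by blast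
  have "K = B0 \<union> (K - C)" "B0 \<inter> (K - C) = {}" using KC by blast+
  moreover have "finite (K - C)" using indep_finite[OF M K(3)] by simp
  ultimately have "card K = card B0 + card (K - C)" using card_Un_disjoint[OF finB0] by metis
  then have "card (K - C) = card I" using K(4) card_IB1 by simp
  moreover have "K - C \<subseteq> I" using K(2) B0C B1C by blast
  ultimately have "K - C = I" using card_subset_eq[OF finI] by blast
  then have "K = I \<union> B0" using KC by blast
  then show ?thesis using K(3) by simp
qed

lemma bases_contract_eq:
  assumes M: "matroid M" and C: "C \<subseteq> gnd M" and B0: "B0 \<in> bases (restrict M C)"
  shows "bases (contract M C) = maximal_sets (\<lambda>I. I \<subseteq> gnd M - C \<and> indep M (I \<union> B0))"
    (is "_ = maximal_sets ?F")
proof (intro equalityI subsetI)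
  have B0C: "B0 \<subseteq> C" and indep_B0: "indep M B0"
    using B0 basis_restrict_subset basis_restrict_indep by blast+
  have finB0: "finite B0" using indep_finite[OF M indep_B0] .
  fix X
  {
    assume "X \<in> bases (contract M C)"
    then obtain BC where X: "X \<subseteq> gnd M - C" and BC: "BC \<in> bases (restrict M C)" "X \<union> BC \<in> bases M"
      unfolding bases_contract by blast
    have FX: "?F X" using indep_Un_basis_restrict[OF M C B0 BC(1)] X basis_indep[OF BC(2)] by blast
    have "J = X" if J: "?F J" "X \<subseteq> J" for J
    proof -
      have finJ: "finite J" using indep_finite[OF M] J(1) indep_subset by blast
      have finBC: "finite BC" using indep_finite[OF M basis_restrict_indep[OF BC(1)]] .
      have "card (J \<union> B0) \<le> card (X \<union> BC)" using indep_card_le_basis[OF M _ BC(2)] J(1) by blast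
      moreover have "card (J \<union> B0) = card J + card B0"
        using J(1) B0C finJ finB0 by (intro card_Un_disjoint) auto
      moreover have "card (X \<union> BC) = card X + card BC"
        using X basis_restrict_subset[OF BC(1)] finite_subset[OF J(2) finJ] finBC
        by (intro card_Un_disjoint) auto
      moreover have "card BC = card B0" using bases_card_eq[OF matroid_restrict[OF M C] BC(1) B0] .
      ultimately have "card J \<le> card X" by simp
      then show "J = X" using card_seteq[OF finJ J(2)] by simp
    qed
    then show "X \<in> maximal_sets ?F" using FX unfolding maximal_sets_def by blast
  next
    assume X: "X \<in> maximal_sets ?F"
    then have FX: "?F X" and X_max: "\<And>J. ?F J \<Longrightarrow> X \<subseteq> J \<Longrightarrow> J = X"
      unfolding maximal_sets_def by blast+
    obtain B where B: "B \<in> bases M" "X \<union> B0 \<subseteq> B" using FX unfolding indep_def by blast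
    have "B \<inter> C \<subseteq> C \<and> indep M (B \<inter> C)" using indep_subset[OF basis_indep[OF B(1)]] by blast
    then have BC: "B \<inter> C = B0" using B0 B(2) B0C unfolding bases_restrict maximal_sets_def by blast
    have B_split: "B - C \<union> B0 = B" using BC by blast
    have "?F (B - C)"
      using matroid_basis_subset[OF M B(1)] basis_indep[OF B(1)] unfolding B_split by blast
    moreover have "X \<subseteq> B - C" using B(2) FX by blast
    ultimately have "B - C = X" using X_max by blast
    then have "X \<union> B0 \<in> bases M" using B(1) B_split by simp
    then show "X \<in> bases (contract M C)" unfolding bases_contract using FX B0 by blast
  }
qed

lemma indep_family_contract_basis:
  assumes M: "matroid M" and C: "C \<subseteq> gnd M" and B0: "B0 \<in> bases (restrict M C)"
  shows "indep_family (gnd M - C) (\<lambda>I. I \<subseteq> gnd M - C \<and> indep M (I \<union> B0))"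
  using indep_family_contract[OF M basis_restrict_indep[OF B0]] basis_restrict_subset[OF B0] by blast

lemma matroid_contract:
  assumes M: "matroid M" and C: "C \<subseteq> gnd M"
  shows "matroid (contract M C)"
proof -
  obtain B0 where B0: "B0 \<in> bases (restrict M C)"
    using matroid_bases_nonempty[OF matroid_restrict[OF M C]] by blast
  show ?thesis
    using matroid_maximal_sets[OF indep_family_contract_basis[OF M C B0]]
    by (metis bases_contract_eq[OF M C B0] gnd_bases_collapse gnd_contract)
qed

lemma contract_indep_iff:
  assumes M: "matroid M" and C: "C \<subseteq> gnd M" and B0: "B0 \<in> bases (restrict M C)"
  shows "indep (contract M C) I \<longleftrightarrow> I \<subseteq> gnd M - C \<and> indep M (I \<union> B0)"
  using indep_family_indep_iff[OF indep_family_contract_basis[OF M C B0]]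
  by (metis bases_contract_eq[OF M C B0] gnd_bases_collapse gnd_contract)

lemma delete_indep_iff:
  assumes "matroid M" "I \<subseteq> gnd M - {e}"
  shows "indep (delete M e) I \<longleftrightarrow> indep M I"
  using restrict_indep_iff[of "gnd M - {e}" M I] matroid_finite_gnd[OF assms(1)] assms(2)
  unfolding delete_def by simp

lemma binary_delete:
  assumes M: "matroid M" and bin: "binary M"
  shows "binary (delete M e)"
proof (rule binaryI)
  show "gnd (delete M e) = gnd M - {e}" by simp
  show "gf2_representable (gnd M - {e}) (indep M)"
    using bin gf2_representable_mono unfolding binary_iff_gf2_representable by blast
  show "indep (delete M e) I \<longleftrightarrow> indep M I" if "I \<subseteq> gnd M - {e}" for I
    using delete_indep_iff[OF M that] .
qed

lemma matroid_minor:
  assumes M: "matroid M" and C: "C \<subseteq> gnd M" and S: "S \<subseteq> gnd M - C"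
  shows "matroid (restrict (contract M C) S)"
  using matroid_restrict[OF matroid_contract[OF M C]] S by simp

lemma minor_indep_iff:
  assumes M: "matroid M" and C: "C \<subseteq> gnd M" and B0: "B0 \<in> bases (restrict M C)"
    and S: "S \<subseteq> gnd M - C"
  shows "indep (restrict (contract M C) S) I \<longleftrightarrow> I \<subseteq> S \<and> indep M (I \<union> B0)"
proof -
  have "finite S" using S matroid_finite_gnd[OF M] finite_subset by blast
  then have "indep (restrict (contract M C) S) I \<longleftrightarrow> I \<subseteq> S \<and> indep (contract M C) I"
    by (rule restrict_indep_iff)
  also have "\<dots> \<longleftrightarrow> I \<subseteq> S \<and> indep M (I \<union> B0)"
    unfolding contract_indep_iff[OF M C B0] using S by blast
  finally show ?thesis .
qed

section \<open>Rank and circuit-hyperplanes\<close>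

lemma finite_card_indep_subsets: "finite T \<Longrightarrow> finite (card ` {J. J \<subseteq> T \<and> indep M J})"
  by (simp add: finite_Collect_subsets)

lemma card_le_rk: "finite T \<Longrightarrow> I \<subseteq> T \<Longrightarrow> indep M I \<Longrightarrow> card I \<le> rk M T"
  unfolding rk_def by (rule Max_ge) (auto simp: finite_card_indep_subsets)

lemma rk_eqI:
  assumes "finite T" "I \<subseteq> T" "indep M I" "card I = k"
    and "\<And>J. J \<subseteq> T \<Longrightarrow> indep M J \<Longrightarrow> card J \<le> k"
  shows "rk M T = k"
  unfolding rk_def using assms by (intro Max_eqI) (auto simp: finite_card_indep_subsets)

lemma ex_indep_card_rk:
  assumes "finite T" "indep M {}"
  shows "\<exists>I\<subseteq>T. indep M I \<and> card I = rk M T"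
proof -
  have "{} \<in> {J. J \<subseteq> T \<and> indep M J}" using assms(2) by simp
  then have "card ` {J. J \<subseteq> T \<and> indep M J} \<noteq> {}" by blast
  then have "rk M T \<in> card ` {J. J \<subseteq> T \<and> indep M J}"
    unfolding rk_def by (rule Max_in[OF finite_card_indep_subsets[OF assms(1)]])
  then obtain I where "I \<in> {J. J \<subseteq> T \<and> indep M J}" "rk M T = card I" by (rule imageE)
  then show ?thesis by auto
qed

lemma rk_gnd: "matroid M \<Longrightarrow> B \<in> bases M \<Longrightarrow> rk M (gnd M) = card B"
  by (rule rk_eqI) (auto simp: matroid_finite_gnd matroid_basis_subset basis_indep indep_card_le_basis)

lemma circuit_nonempty: "matroid M \<Longrightarrow> circuit M H \<Longrightarrow> H \<noteq> {}"
  unfolding circuit_def using indep_empty by blast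

lemma rk_circuit:
  assumes M: "matroid M" and H: "circuit M H"
  shows "rk M H = card H - 1"
proof -
  have sub: "H \<subseteq> gnd M" and dep: "\<not> indep M H" and min: "\<forall>h\<in>H. indep M (H - {h})"
    using H unfolding circuit_def by blast+
  have finH: "finite H" using sub matroid_finite_gnd[OF M] finite_subset by blast
  obtain h where h: "h \<in> H" using circuit_nonempty[OF M H] by blast
  show ?thesis
  proof (rule rk_eqI[OF finH _ min[rule_format, OF h]])
    show "H - {h} \<subseteq> H" by blast
    show "card (H - {h}) = card H - 1" using h by simp
    show "card J \<le> card H - 1" if "J \<subseteq> H" "indep M J" for J
    proof -
      have "J \<noteq> H" using that dep by blast
      then have "card J < card H" using that(1) finH psubset_card_mono by blast
      then show ?thesis by simp
    qed
  qed
qed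

lemma circuit_hyperplane_card:
  assumes M: "matroid M" and H: "circuit_hyperplane M H" and B: "B \<in> bases M"
  shows "card H = card B"
proof -
  have C: "circuit M H" and "rk M H + 1 = rk M (gnd M)"
    using H unfolding circuit_hyperplane_def hyperplane_def by blast+
  moreover have "card H > 0"
    using circuit_nonempty[OF M C] C matroid_finite_gnd[OF M] finite_subset
    unfolding circuit_def by (auto simp: card_gt_0_iff)
  ultimately show ?thesis using rk_circuit[OF M C] rk_gnd[OF M B] by simp
qed

text \<open>Since \<open>H\<close> is a flat of rank \<open>|H| - 1\<close>, adding any \<open>w \<notin> H\<close> raises the rank to \<open>|H|\<close>,
  and a maximal independent subset of \<open>H + w\<close> is \<open>H + w - z\<close> for some \<open>z \<in> H\<close>.\<close>

lemma circuit_hyperplane_ex_indep: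
  assumes M: "matroid M" and H: "circuit_hyperplane M H" and w: "w \<in> gnd M - H"
  shows "\<exists>z\<in>H. indep M (insert w (H - {z}))"
proof -
  have C: "circuit M H" and flat: "flat M H" using H unfolding circuit_hyperplane_def hyperplane_def by blast+
  have dep: "\<not> indep M H" and sub: "H \<subseteq> gnd M" using C unfolding circuit_def by blast+
  have finH: "finite H" using sub matroid_finite_gnd[OF M] finite_subset by blast
  obtain I where I: "I \<subseteq> insert w H" "indep M I" "card I = rk M (insert w H)"
    using ex_indep_card_rk[OF _ indep_empty[OF M]] finH by blast
  have "rk M H < rk M (insert w H)" using flat w unfolding flat_def by blast
  then have card_I: "card H \<le> card I" using I(3) rk_circuit[OF M C] circuit_nonempty[OF M C] finH
    by (simp add: card_gt_0_iff)
  have "I \<noteq> insert w H" using I(2) dep indep_subset by blast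
  then obtain z where z: "z \<in> insert w H" "z \<notin> I" using I(1) by blast
  have card_wH: "card (insert w H - {z}) = card H" using z(1) w finH by simp
  have I_eq: "I = insert w H - {z}"
  proof (rule card_seteq)
    show "finite (insert w H - {z})" using finH by simp
    show "I \<subseteq> insert w H - {z}" using I(1) z(2) by blast
    show "card (insert w H - {z}) \<le> card I" using card_wH card_I by simp
  qed
  then have "z \<noteq> w" using I(2) dep w by (metis Diff_iff Diff_insert_absorb)
  then show ?thesis using I(2) I_eq z(1) w by (intro bexI[of _ z]) (auto simp: insert_Diff_if)
qed

lemma circuit_hyperplane_exchange:
  assumes M: "matroid M" and H: "circuit_hyperplane M H" and x: "x \<in> H" and w: "w \<in> gnd M - H"
  shows "insert w (H - {x}) \<in> bases M"
proof -
  have C: "circuit M H" using H unfolding circuit_hyperplane_def by blast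
  have dep: "\<not> indep M H" and min: "indep M (H - {x})" and sub: "H \<subseteq> gnd M"
    using C x unfolding circuit_def by blast+
  have finH: "finite H" using sub matroid_finite_gnd[OF M] finite_subset by blast
  obtain z where z: "z \<in> H" "indep M (insert w (H - {z}))"
    using circuit_hyperplane_ex_indep[OF M H w] by blast
  have "card (H - {x}) < card (insert w (H - {z}))"
    using finH x z(1) w card_Diff1_less[OF finH x] card_insert_Diff_singleton[OF finH z(1), of w] by simp
  then obtain u where u: "u \<in> insert w (H - {z}) - (H - {x})" "indep M (insert u (H - {x}))"
    using indep_augment[OF M min z(2)] by blast
  have "u \<noteq> x" using u(2) dep x by (metis insert_Diff)
  then have "u = w" using u(1) by blast
  moreover obtain B where B: "B \<in> bases M" using matroid_bases_nonempty[OF M] by blast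
  moreover have "card (insert w (H - {x})) = card B"
    using card_insert_Diff_singleton[OF finH x, of w] w circuit_hyperplane_card[OF M H B] by simp
  ultimately show ?thesis using indep_card_eq_basis[OF M] u(2) by blast
qed

lemma circuit_hyperplaneI:
  assumes M: "matroid M" and sub: "H \<subseteq> gnd M" and proper: "H \<noteq> gnd M"
    and dep: "\<not> indep M H" and min: "\<And>h. h \<in> H \<Longrightarrow> indep M (H - {h})"
    and exch: "\<And>h w. h \<in> H \<Longrightarrow> w \<in> gnd M - H \<Longrightarrow> indep M (insert w (H - {h}))"
    and bound: "\<And>J. indep M J \<Longrightarrow> card J \<le> card H"
  shows "circuit_hyperplane M H"
proof -
  have C: "circuit M H" unfolding circuit_def using sub dep min by blast
  have finE: "finite (gnd M)" using matroid_finite_gnd[OF M] .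
  have finH: "finite H" using sub finE finite_subset by blast
  obtain h0 where h0: "h0 \<in> H" using circuit_nonempty[OF M C] by blast
  have pos: "card H > 0" using finH h0 card_gt_0_iff by blast
  have card_exch: "card (insert w (H - {h0})) = card H" if "w \<notin> H" for w
    using card_insert_Diff_singleton[OF finH h0] that by simp
  have rk_above: "card H \<le> rk M (insert x H)" if x: "x \<in> gnd M - H" for x
  proof -
    have "card (insert x (H - {h0})) \<le> rk M (insert x H)"
      using exch[OF h0 x] finH by (intro card_le_rk) auto
    then show ?thesis using card_exch x by simp
  qed
  obtain w where w: "w \<in> gnd M - H" using sub proper by blast
  have "rk M (gnd M) = card H"
  proof (rule rk_eqI[OF finE])
    show "insert w (H - {h0}) \<subseteq> gnd M" using w sub by blast
    show "indep M (insert w (H - {h0}))" using exch[OF h0 w] .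
    show "card (insert w (H - {h0})) = card H" using card_exch w by simp
  qed (rule bound)
  then show ?thesis
    unfolding circuit_hyperplane_def hyperplane_def flat_def
    using C sub rk_circuit[OF M C] rk_above pos by fastforce
qed

lemma maximal_sets_insert_circuit_hyperplane:
  assumes fam: "indep_family S F" and H: "circuit_hyperplane (S, maximal_sets F) H"
  shows "maximal_sets (\<lambda>I. F I \<or> I = H) = insert H (maximal_sets F)"
proof -
  let ?M = "(S, maximal_sets F)"
  have M: "matroid ?M" using matroid_maximal_sets[OF fam] .
  have notFH: "\<not> F H" and HS: "H \<subseteq> S"
    using H indep_family_indep_iff[OF fam] unfolding circuit_hyperplane_def circuit_def by auto
  have finS: "finite S" and FS: "\<And>I. F I \<Longrightarrow> I \<subseteq> S" using fam unfolding indep_family_def by blast+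
  have finH: "finite H" using HS finS finite_subset by blast
  have card_basis: "card B = card H" if "B \<in> maximal_sets F" for B
    using circuit_hyperplane_card[OF M H] that by simp
  obtain B0 where B0: "B0 \<in> maximal_sets F" using matroid_bases_nonempty[OF M] by auto
  have card_F: "card J \<le> card H" if "F J" for J
  proof -
    have "indep ?M J" using that indep_family_indep_iff[OF fam] by simp
    moreover have "B0 \<in> bases ?M" using B0 by simp
    ultimately show ?thesis using indep_card_le_basis[OF M] card_basis[OF B0] by metis
  qed
  show ?thesis
  proof (intro equalityI subsetI)
    fix B assume "B \<in> maximal_sets (\<lambda>I. F I \<or> I = H)"
    then show "B \<in> insert H (maximal_sets F)" unfolding maximal_sets_def by blast
  next
    fix B assume B: "B \<in> insert H (maximal_sets F)"
    have "J = B" if J: "F J \<or> J = H" "B \<subseteq> J" for J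
    proof (cases "B = H")
      case True
      then have "F J \<Longrightarrow> J = H"
        using card_seteq[OF finite_subset[OF FS finS] J(2)] card_F by blast
      then show ?thesis using J(1) True by blast
    next
      case False
      then have maxB: "B \<in> maximal_sets F" using B by blast
      show ?thesis
      proof (cases "J = H")
        case True
        then have "B = H" using card_subset_eq[OF finH] J(2) card_basis[OF maxB] by blast
        then show ?thesis using False by blast
      qed (use J maxB in \<open>auto simp: maximal_sets_def\<close>)
    qed
    moreover have "F B \<or> B = H" using B unfolding maximal_sets_def by blast
    ultimately show "B \<in> maximal_sets (\<lambda>I. F I \<or> I = H)" unfolding maximal_sets_def by blast
  qed
qed

section \<open>Relaxation\<close>

lemma indep_relax_iff: "indep (relax M H) I \<longleftrightarrow> indep M I \<or> I \<subseteq> H"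
  unfolding indep_def by auto

lemma circuit_hyperplane_not_gnd:
  assumes "circuit_hyperplane M H"
  shows "H \<noteq> gnd M"
  using assms unfolding circuit_hyperplane_def hyperplane_def by auto

lemma circuit_hyperplane_subset_if_no_exchange:
  assumes M: "matroid M" and H: "circuit_hyperplane M H" and B: "B \<in> bases M" and x: "x \<in> B - H"
    and no_exchange: "\<forall>y\<in>H - B. \<not> indep M (insert y (B - {x}))"
  shows "B - {x} \<subseteq> H"
proof
  fix w assume w: "w \<in> B - {x}"
  show "w \<in> H"
  proof (rule ccontr)
    assume "w \<notin> H"
    then have w': "w \<in> gnd M - H" using w matroid_basis_subset[OF M B] by blast
    have C: "circuit M H" using H unfolding circuit_hyperplane_def by blast
    obtain z where z: "z \<in> H" using circuit_nonempty[OF M C] by blast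
    have B': "insert w (H - {z}) \<in> bases M" using circuit_hyperplane_exchange[OF M H z w'] .
    have finB: "finite B" using indep_finite[OF M basis_indep[OF B]] .
    have "card (B - {x}) < card B" using finB x by (intro card_Diff1_less) auto
    then have "card (B - {x}) < card (insert w (H - {z}))"
      using bases_card_eq[OF M B' B] by linarith
    then obtain u where u: "u \<in> insert w (H - {z}) - (B - {x})" "indep M (insert u (B - {x}))"
      using indep_augment[OF M indep_subset[OF basis_indep[OF B]] basis_indep[OF B']] by blast
    then have "u \<in> H - B" using w x by auto
    then show False using no_exchange u(2) by blast
  qed
qed

lemma circuit_hyperplane_exchange_into:
  assumes M: "matroid M" and H: "circuit_hyperplane M H" and B: "B \<in> bases M" and x: "x \<in> B - H"
  shows "\<exists>y\<in>H - B. insert y (B - {x}) \<in> bases M \<or> insert y (B - {x}) = H"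
proof (cases "\<exists>y\<in>H - B. indep M (insert y (B - {x}))")
  case True
  then obtain y where y: "y \<in> H - B" "indep M (insert y (B - {x}))" by blast
  have "card (insert y (B - {x})) = card B"
    using card_insert_Diff_singleton[OF indep_finite[OF M basis_indep[OF B]]] x y by simp
  then show ?thesis using indep_card_eq_basis[OF M y(2) B] y(1) by blast
next
  case False
  then have BH: "B - {x} \<subseteq> H" using circuit_hyperplane_subset_if_no_exchange[OF M H B x] by blast
  have C: "circuit M H" using H unfolding circuit_hyperplane_def by blast
  have "\<not> indep M H" using C unfolding circuit_def by blast
  then have "B - {x} \<noteq> H" using basis_indep[OF B] indep_subset by blast
  then obtain y where y: "y \<in> H" "y \<notin> B - {x}" using BH by blast
  have finH: "finite H"
    using C matroid_finite_gnd[OF M] finite_subset unfolding circuit_def by blast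
  have "insert y (B - {x}) = H"
  proof (rule card_subset_eq[OF finH])
    show "insert y (B - {x}) \<subseteq> H" using BH y by blast
    show "card (insert y (B - {x})) = card H"
      using card_insert_Diff_singleton[OF indep_finite[OF M basis_indep[OF B]]] x y
        circuit_hyperplane_card[OF M H B] by simp
  qed
  then show ?thesis using y x by blast
qed

lemma circuit_hyperplane_exchange_out_of:
  assumes M: "matroid M" and H: "circuit_hyperplane M H" and B: "B \<in> bases M" and x: "x \<in> H - B"
  shows "\<exists>y\<in>B - H. insert y (H - {x}) \<in> bases M"
proof -
  have finH: "finite H"
    using H matroid_finite_gnd[OF M] finite_subset
    unfolding circuit_hyperplane_def circuit_def by blast
  have "\<not> B \<subseteq> H"
  proof
    assume "B \<subseteq> H"
    then have "B = H" using card_subset_eq[OF finH] circuit_hyperplane_card[OF M H B] by simp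
    then show False using x by blast
  qed
  then obtain y where y: "y \<in> B - H" by blast
  then have "y \<in> gnd M - H" using matroid_basis_subset[OF M B] by blast
  then show ?thesis using circuit_hyperplane_exchange[OF M H] x y by blast
qed

lemma matroid_relax:
  assumes M: "matroid M" and H: "circuit_hyperplane M H"
  shows "matroid (relax M H)"
proof -
  have exch: "\<exists>y\<in>B2 - B1. insert y (B1 - {x}) \<in> insert H (bases M)"
    if B1: "B1 \<in> insert H (bases M)" and B2: "B2 \<in> insert H (bases M)" and x: "x \<in> B1 - B2"
    for B1 B2 x
  proof -
    consider "B1 \<in> bases M" "B2 \<in> bases M" | "B1 = H" "B2 \<in> bases M" | "B1 \<in> bases M" "B2 = H"
      using B1 B2 x by blast
    then show ?thesis
    proof cases
      case 1
      then obtain y where "y \<in> B2 - B1" "insert y (B1 - {x}) \<in> bases M"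
        using matroid_basis_exchange[OF M _ _ x] by blast
      then show ?thesis by (intro bexI[of _ y]) simp_all
    next
      case 2
      then show ?thesis using circuit_hyperplane_exchange_out_of[OF M H 2(2)] x by blast
    next
      case 3
      then obtain y where "y \<in> H - B1" "insert y (B1 - {x}) \<in> insert H (bases M)"
        using circuit_hyperplane_exchange_into[OF M H 3(1)] x by blast
      then show ?thesis using 3(2) by blast
    qed
  qed
  have HE: "H \<subseteq> gnd M" using H unfolding circuit_hyperplane_def circuit_def by blast
  show ?thesis
    unfolding matroid_def gnd_relax bases_relax
  proof (intro conjI ballI)
    show "finite (gnd M)" using matroid_finite_gnd[OF M] .
    show "insert H (bases M) \<noteq> {}" by simp
    show "B \<subseteq> gnd M" if "B \<in> insert H (bases M)" for B
      using that HE matroid_basis_subset[OF M] by blast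
  qed (rule exch)
qed

lemma circuit_hyperplane_relax:
  assumes M: "matroid M" and H: "circuit_hyperplane M H" and H': "circuit_hyperplane M H'"
    and ne: "H \<noteq> H'"
  shows "circuit_hyperplane (relax M H) H'"
proof -
  have C': "circuit M H'" and C: "circuit M H"
    using H H' unfolding circuit_hyperplane_def by blast+
  have H'E: "H' \<subseteq> gnd M" and dep: "\<not> indep M H'" and min: "\<And>h. h \<in> H' \<Longrightarrow> indep M (H' - {h})"
    using C' unfolding circuit_def by blast+
  have HE: "H \<subseteq> gnd M" using C unfolding circuit_def by blast
  have fin: "finite H" "finite H'"
    using HE H'E matroid_finite_gnd[OF M] finite_subset by blast+
  obtain B where B: "B \<in> bases M" using matroid_bases_nonempty[OF M] by blast
  have card_eq: "card H = card H'"
    using circuit_hyperplane_card[OF M H B] circuit_hyperplane_card[OF M H' B] by simp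
  show ?thesis
  proof (rule circuit_hyperplaneI)
    show "matroid (relax M H)" using matroid_relax[OF M H] .
    show "H' \<subseteq> gnd (relax M H)" "H' \<noteq> gnd (relax M H)"
      using H'E circuit_hyperplane_not_gnd[OF H'] by simp_all
    have "\<not> H' \<subseteq> H"
    proof
      assume "H' \<subseteq> H"
      then have "H' = H" using card_subset_eq[OF fin(1)] card_eq by simp
      then show False using ne by simp
    qed
    then show "\<not> indep (relax M H) H'" using dep by (simp add: indep_relax_iff)
    show "indep (relax M H) (H' - {h})" if "h \<in> H'" for h
      using min[OF that] by (simp add: indep_relax_iff)
    show "indep (relax M H) (insert w (H' - {h}))" if "h \<in> H'" "w \<in> gnd (relax M H) - H'" for h w
      using basis_indep[OF circuit_hyperplane_exchange[OF M H']] that by (simp add: indep_relax_iff)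
    show "card J \<le> card H'" if "indep (relax M H) J" for J
    proof (cases "indep M J")
      case True
      then show ?thesis using indep_card_le_basis[OF M _ B] circuit_hyperplane_card[OF M H' B] by simp
    next
      case False
      then have "J \<subseteq> H" using that by (simp add: indep_relax_iff)
      then show ?thesis using card_mono[OF fin(1)] card_eq by simp
    qed
  qed
qed

section \<open>Relaxing two complementary circuit-hyperplanes\<close>

locale double_relaxation =
  fixes N :: "'a matroid" and X Y :: "'a set"
  assumes matroid_N: "matroid N" and binary_N: "binary N" and connected_N: "connected_matroid N"
    and X: "circuit_hyperplane N X" and Y: "circuit_hyperplane N Y"
    and disjoint: "X \<inter> Y = {}" and union: "X \<union> Y = gnd N"
begin

lemma swap: "double_relaxation N Y X"
  using matroid_N binary_N connected_N X Y disjoint union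
  unfolding double_relaxation_def by (simp add: Int_commute Un_commute)

definition MXY :: "'a matroid" where
  "MXY = relax (relax N X) Y"

lemma finite_gnd: "finite (gnd N)"
  using matroid_finite_gnd[OF matroid_N] .

lemma X_subset: "X \<subseteq> gnd N"
  using union by blast

lemma gnd_minus_X: "gnd N - X = Y"
  using union disjoint by blast

lemma finite_X: "finite X"
  using X_subset finite_gnd finite_subset by blast

lemma X_circuit: "circuit N X"
  using X unfolding circuit_hyperplane_def by blast

lemma X_dep: "\<not> indep N X"
  using X_circuit unfolding circuit_def by blast

lemma X_nonempty: "X \<noteq> {}"
  using X_dep indep_empty[OF matroid_N] by blast

lemma X_proper_indep:
  assumes "J \<subseteq> X" "J \<noteq> X"
  shows "indep N J"
proof -
  obtain h where h: "h \<in> X" "J \<subseteq> X - {h}" using assms by blast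
  then have "indep N (X - {h})" using X_circuit unfolding circuit_def by blast
  then show ?thesis using h(2) by (rule indep_subset)
qed

lemma X_exchange: "x \<in> X \<Longrightarrow> w \<in> Y \<Longrightarrow> insert w (X - {x}) \<in> bases N"
  using circuit_hyperplane_exchange[OF matroid_N X] gnd_minus_X by blast

lemma card_basis: "B \<in> bases N \<Longrightarrow> card B = card X"
  using circuit_hyperplane_card[OF matroid_N X] by simp

lemma card_indep_N:
  assumes "indep N I"
  shows "card I \<le> card X"
proof -
  obtain B where B: "B \<in> bases N" using matroid_bases_nonempty[OF matroid_N] by blast
  show ?thesis using indep_card_le_basis[OF matroid_N assms B] card_basis[OF B] by simp
qed

lemma circuit_superset_X:
  assumes C: "circuit N C" and XC: "X \<subseteq> C"
  shows "C = X"
proof (rule ccontr)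
  assume "C \<noteq> X"
  then obtain c where c: "c \<in> C" "c \<notin> X" using XC by blast
  then have "indep N (C - {c})" using C unfolding circuit_def by blast
  moreover have "X \<subseteq> C - {c}" using XC c by blast
  ultimately show False using X_dep indep_subset by blast
qed

lemma gnd_MXY [simp]: "gnd MXY = gnd N"
  by (simp add: MXY_def)

lemma bases_MXY: "bases MXY = insert Y (insert X (bases N))"
  by (simp add: MXY_def)

end

sublocale double_relaxation \<subseteq> swapped: double_relaxation N Y X
  by (rule swap)

context double_relaxation
begin

lemma card_Y: "card Y = card X"
proof -
  obtain B where B: "B \<in> bases N" using matroid_bases_nonempty[OF matroid_N] by blast
  show ?thesis using card_basis[OF B] swapped.card_basis[OF B] by simp
qed

text \<open>Connectivity excludes \<open>|X| \<le> 2\<close>: for \<open>X = {a, b}\<close>, \<open>Y = {c, d}\<close>, a circuit through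
  \<open>a\<close> and \<open>c\<close> can contain neither \<open>b\<close> nor \<open>d\<close>, so it lies in the basis \<open>{a, c}\<close>.\<close>

lemma card_X_ge_3: "3 \<le> card X"
proof (rule ccontr)
  assume "\<not> 3 \<le> card X"
  moreover have "card X \<noteq> 0" using finite_X X_nonempty by simp
  ultimately consider "card X = 1" | "card X = 2" by linarith
  then show False
  proof cases
    case 1
    obtain B where B: "B \<in> bases N" using matroid_bases_nonempty[OF matroid_N] by blast
    obtain b where b: "B = {b}" using card_basis[OF B] 1 card_1_singletonE by metis
    have "b \<in> X \<or> b \<in> Y" using matroid_basis_subset[OF matroid_N B] b union by blast
    then have "B = X \<or> B = Y"
      using 1 card_Y b by (metis card_1_singletonE singletonD)
    then show False using basis_indep[OF B] X_dep swapped.X_dep by blast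
  next
    case 2
    obtain a b where ab: "X = {a, b}" "a \<noteq> b" using 2 card_2_iff by metis
    obtain c d where cd: "Y = {c, d}" "c \<noteq> d" using 2 card_Y card_2_iff by metis
    have "a \<in> gnd N" "c \<in> gnd N" "a \<noteq> c" using ab cd union disjoint by blast+
    then obtain C where C: "circuit N C" "a \<in> C" "c \<in> C"
      using connected_N unfolding connected_matroid_def by blast
    have "b \<notin> C" using circuit_superset_X[OF C(1)] C(2,3) ab cd disjoint by blast
    moreover have "d \<notin> C" using swapped.circuit_superset_X[OF C(1)] C(2,3) ab cd disjoint by blast
    moreover have "C \<subseteq> gnd N" using C(1) unfolding circuit_def by blast
    ultimately have "C \<subseteq> insert c (X - {b})" using ab cd union by blast
    moreover have "insert c (X - {b}) \<in> bases N" using X_exchange ab cd by blast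
    ultimately show False using C(1) basis_indep indep_subset unfolding circuit_def by blast
  qed
qed

lemma MXY_swap: "swapped.MXY = MXY"
  by (simp add: MXY_def swapped.MXY_def relax_def insert_commute)

lemma indep_MXY_iff: "indep MXY I \<longleftrightarrow> indep N I \<or> I = X \<or> I = Y"
  using X_proper_indep swapped.X_proper_indep unfolding MXY_def indep_relax_iff by blast

lemma card_indep_MXY: "indep MXY I \<Longrightarrow> card I \<le> card X"
  using card_indep_N card_Y unfolding indep_MXY_iff by auto

lemma not_indep_MXY_insert_X: "x \<notin> X \<Longrightarrow> \<not> indep MXY (insert x X)"
  using card_indep_MXY finite_X by fastforce

lemma exchange_indep_MXY: "x \<in> X \<Longrightarrow> w \<in> Y \<Longrightarrow> indep MXY (insert w (X - {x}))"
  using basis_indep[OF X_exchange] indep_MXY_iff by blast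

lemma matroid_MXY: "matroid MXY"
proof -
  have "X \<noteq> Y" using X_nonempty disjoint by blast
  then show ?thesis
    unfolding MXY_def
    using matroid_relax[OF matroid_relax[OF matroid_N X] circuit_hyperplane_relax[OF matroid_N X Y]]
    by blast
qed

end

context double_relaxation
begin

lemma not_binary_delete:
  assumes e: "e \<in> X"
  shows "\<not> binary (delete MXY e)"
proof
  assume "binary (delete MXY e)"
  then have rep: "gf2_representable (gnd N - {e}) (indep MXY)"
    using binary_iff_representable_on[of "delete MXY e" "indep MXY"] delete_indep_iff[OF matroid_MXY]
    by simp
  have "2 \<le> card (X - {e})" using card_X_ge_3 e finite_X by simp
  then obtain x1 x2 where x: "x1 \<in> X - {e}" "x2 \<in> X - {e}" "x1 \<noteq> x2" by (rule card_ge_2_obtain)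
  have "\<not> indep MXY {x1, x2}"
  proof (rule gf2_representable_fundamental_circuits_parallel[OF rep])
    show "finite (gnd N - {e})" using finite_gnd by simp
    show "Y \<subseteq> gnd N - {e}" using swapped.X_subset e disjoint by blast
    show "indep MXY Y" using indep_MXY_iff by blast
    show "x1 \<in> gnd N - {e} - Y" "x2 \<in> gnd N - {e} - Y" "x1 \<noteq> x2" using x X_subset disjoint by auto
    show "\<forall>y\<in>Y. indep MXY (insert x1 (Y - {y}))" "\<forall>y\<in>Y. indep MXY (insert x2 (Y - {y}))"
      using swapped.exchange_indep_MXY[unfolded MXY_swap] x by simp_all
    show "\<not> indep MXY (insert x1 Y)" "\<not> indep MXY (insert x2 Y)"
      using swapped.not_indep_MXY_insert_X[unfolded MXY_swap] x disjoint by auto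
  qed
  moreover have "indep MXY {x1, x2}"
  proof -
    have "{x1, x2} \<subseteq> X" "{x1, x2} \<noteq> X" using x e by blast+
    then show ?thesis using X_proper_indep indep_MXY_iff by blast
  qed
  ultimately show False by contradiction
qed

lemma not_binary_contract:
  assumes e: "e \<in> X"
  shows "\<not> binary (contract MXY {e})"
proof
  assume bin: "binary (contract MXY {e})"
  have "{e} \<noteq> X" using card_X_ge_3 by auto
  then have "indep MXY {e}" using X_proper_indep e indep_MXY_iff by blast
  moreover have "{e} \<subseteq> gnd MXY" using e X_subset by auto
  ultimately have "indep (contract MXY {e}) I \<longleftrightarrow> indep MXY (I \<union> {e})"
    if "I \<subseteq> gnd (contract MXY {e})" for I
    using contract_indep_iff[OF matroid_MXY _ indep_basis_restrict] that by simp
  then have rep: "gf2_representable (gnd N - {e}) (\<lambda>I. indep MXY (I \<union> {e}))"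
    using bin by (subst (asm) binary_iff_representable_on) simp_all
  obtain x1 x2 x3 where x: "x1 \<in> Y" "x2 \<in> Y" "x3 \<in> Y" "x1 \<noteq> x2" "x1 \<noteq> x3" "x2 \<noteq> x3"
    using swapped.card_X_ge_3 by (rule card_ge_3_obtain)
  have "\<not> indep MXY ({x1, x2} \<union> {e})"
  proof (rule gf2_representable_fundamental_circuits_parallel[OF rep])
    have Xe: "X - {e} \<union> {e} = X" using e by blast
    show "finite (gnd N - {e})" using finite_gnd by simp
    show "X - {e} \<subseteq> gnd N - {e}" "indep MXY (X - {e} \<union> {e})"
      using X_subset indep_MXY_iff Xe by auto
    show "x1 \<in> gnd N - {e} - (X - {e})" "x2 \<in> gnd N - {e} - (X - {e})" "x1 \<noteq> x2"
      using x e swapped.X_subset disjoint by auto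
    have "insert x (X - {e} - {y}) \<union> {e} = insert x (X - {y})" if "y \<in> X - {e}" for x y
      using that e by blast
    then show "\<forall>y\<in>X - {e}. indep MXY (insert x1 (X - {e} - {y}) \<union> {e})"
      "\<forall>y\<in>X - {e}. indep MXY (insert x2 (X - {e} - {y}) \<union> {e})"
      using exchange_indep_MXY x by simp_all
    have "insert x (X - {e}) \<union> {e} = insert x X" for x using e by blast
    then show "\<not> indep MXY (insert x1 (X - {e}) \<union> {e})" "\<not> indep MXY (insert x2 (X - {e}) \<union> {e})"
      using not_indep_MXY_insert_X x disjoint by auto
  qed
  moreover have "{x1, x2} \<union> {e} \<subseteq> insert e (Y - {x3})" using x by blast
  then have "indep MXY ({x1, x2} \<union> {e})"
    by (rule indep_subset[OF swapped.exchange_indep_MXY[OF x(3) e, unfolded MXY_swap]])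
  ultimately show False by contradiction
qed

lemma not_binary_MXY: "\<not> binary MXY"
  using binary_delete[OF matroid_MXY] not_binary_delete X_nonempty by blast

lemma not_classZ_MXY: "\<not> classZ MXY"
  using not_binary_delete not_binary_contract X_nonempty X_subset unfolding classZ_def by auto

lemma XY_dep: "P \<in> {X, Y} \<Longrightarrow> \<not> indep N P"
  using X_dep swapped.X_dep by blast

lemma XY_proper_indep: "P \<in> {X, Y} \<Longrightarrow> J \<subset> P \<Longrightarrow> indep N J"
  using X_proper_indep swapped.X_proper_indep by blast

lemma XY_exchange: "P \<in> {X, Y} \<Longrightarrow> x \<in> P \<Longrightarrow> w \<in> gnd N - P \<Longrightarrow> insert w (P - {x}) \<in> bases N"
  using X_exchange swapped.X_exchange gnd_minus_X swapped.gnd_minus_X by blast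

lemma XY_card: "P \<in> {X, Y} \<Longrightarrow> card P = card X"
  using card_Y by blast

lemma XY_subset: "P \<in> {X, Y} \<Longrightarrow> P \<subseteq> gnd N"
  using union by blast

lemma XY_complement: "P \<in> {X, Y} \<Longrightarrow> P' \<in> {X, Y} \<Longrightarrow> P' \<noteq> P \<Longrightarrow> P' = gnd N - P"
  using gnd_minus_X swapped.gnd_minus_X by blast

lemma card_Diff_basis: "B \<in> bases N \<Longrightarrow> card (X - B) + card (Y - B) = card X"
proof -
  assume B: "B \<in> bases N"
  have finB: "finite B" using indep_finite[OF matroid_N basis_indep[OF B]] .
  have "card (X - B) + card (Y - B) = card ((X - B) \<union> (Y - B))"
    using finite_X swapped.finite_X disjoint by (intro card_Un_disjoint[symmetric]) auto
  also have "(X - B) \<union> (Y - B) = gnd N - B" using union by blast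
  also have "card (gnd N - B) = card X + card Y - card B"
    using card_Diff_subset[OF finB matroid_basis_subset[OF matroid_N B]] card_Un_disjoint[OF finite_X
      swapped.finite_X disjoint] union by simp
  finally show ?thesis using card_basis[OF B] card_Y by simp
qed

lemma relaxation_witness:
  assumes H: "H = Y \<or> (H \<in> bases N \<and> 2 \<le> card (Y - H))"
  obtains x1 x2 B where "x1 \<in> Y" "x2 \<in> Y" "x1 \<noteq> x2" "B \<in> bases MXY" "B \<noteq> H" "{x1, x2} \<subseteq> B"
    "\<And>x y. x \<in> {x1, x2} \<Longrightarrow> insert x (X - {y}) \<noteq> H"
proof (cases "H = Y")
  case True
  obtain x1 x2 x3 where x: "x1 \<in> Y" "x2 \<in> Y" "x3 \<in> Y" "x1 \<noteq> x2" "x1 \<noteq> x3" "x2 \<noteq> x3"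
    using swapped.card_X_ge_3 by (rule card_ge_3_obtain)
  obtain z where z: "z \<in> X" using X_nonempty by blast
  show ?thesis
  proof (rule that[of x1 x2 "insert z (Y - {x3})"])
    show "x1 \<in> Y" "x2 \<in> Y" "x1 \<noteq> x2" using x by blast+
    show "insert z (Y - {x3}) \<in> bases MXY"
      unfolding bases_MXY by (intro insertI2) (rule swapped.X_exchange[OF x(3) z])
    show "insert z (Y - {x3}) \<noteq> H" using True z disjoint by blast
    show "{x1, x2} \<subseteq> insert z (Y - {x3})" using x by blast
    have "\<not> X \<subseteq> {y}" for y using card_X_ge_3 card_mono[of "{y}" X] by auto
    then show "insert x (X - {y}) \<noteq> H" for x y using True disjoint by blast
  qed
next
  case False
  then have HB: "H \<in> bases N" and two: "2 \<le> card (Y - H)" using H by blast+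
  obtain x1 x2 where x: "x1 \<in> Y - H" "x2 \<in> Y - H" "x1 \<noteq> x2" using two by (rule card_ge_2_obtain)
  show ?thesis
  proof (rule that[of x1 x2 Y])
    show "x1 \<in> Y" "x2 \<in> Y" "x1 \<noteq> x2" "{x1, x2} \<subseteq> Y" using x by blast+
    show "Y \<in> bases MXY" unfolding bases_MXY by blast
    show "Y \<noteq> H" using HB swapped.X_dep basis_indep by blast
    show "insert x (X - {y}) \<noteq> H" if "x \<in> {x1, x2}" for x y using that x by blast
  qed
qed

text \<open>\<open>X\<close> is a basis of \<open>N'\<close>, and the witnesses \<open>x1\<close>, \<open>x2\<close> have fundamental circuits
  \<open>X + x1\<close>, \<open>X + x2\<close> in \<open>N'\<close>.\<close>

lemma not_binary_relaxation:
  assumes bases: "bases N' = bases MXY - {H}" and gnd: "gnd N' = gnd N"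
    and H: "H = Y \<or> (H \<in> bases N \<and> 2 \<le> card (Y - H))"
  shows "\<not> binary N'"
proof
  assume "binary N'"
  then have rep: "gf2_representable (gnd N) (indep N')"
    using gnd binary_iff_gf2_representable by metis
  have indep_N': "indep N' I \<longleftrightarrow> (\<exists>B\<in>bases MXY. B \<noteq> H \<and> I \<subseteq> B)" for I
    unfolding indep_def bases by blast
  obtain x1 x2 B where x: "x1 \<in> Y" "x2 \<in> Y" "x1 \<noteq> x2" and B: "B \<in> bases MXY" "B \<noteq> H" "{x1, x2} \<subseteq> B"
    and avoid: "\<And>x y. x \<in> {x1, x2} \<Longrightarrow> insert x (X - {y}) \<noteq> H"
    using relaxation_witness[OF H] by blast
  have "\<not> indep N' {x1, x2}"
  proof (rule gf2_representable_fundamental_circuits_parallel[OF rep finite_gnd])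
    have "X \<noteq> H" using H X_dep X_nonempty disjoint basis_indep by blast
    moreover have "X \<in> bases MXY" unfolding bases_MXY by blast
    ultimately show "indep N' X" using indep_N'[of X] by blast
    show "X \<subseteq> gnd N" by (rule X_subset)
    show "x1 \<in> gnd N - X" "x2 \<in> gnd N - X" "x1 \<noteq> x2" using x gnd_minus_X by auto
    have "indep N' (insert x (X - {y}))" if xy: "x \<in> {x1, x2}" "y \<in> X" for x y
    proof -
      have "x \<in> Y" using xy(1) x by blast
      then have "insert x (X - {y}) \<in> bases MXY"
        unfolding bases_MXY by (intro insertI2) (rule X_exchange[OF xy(2)])
      moreover have "insert x (X - {y}) \<noteq> H" using avoid[OF xy(1)] .
      ultimately show ?thesis unfolding indep_N' by (intro bexI[of _ "insert x (X - {y})"]) simp_all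
    qed
    then show "\<forall>y\<in>X. indep N' (insert x1 (X - {y}))" "\<forall>y\<in>X. indep N' (insert x2 (X - {y}))"
      by simp_all
    have "indep N' I \<Longrightarrow> indep MXY I" for I using indep_N' unfolding indep_def by blast
    then show "\<not> indep N' (insert x1 X)" "\<not> indep N' (insert x2 X)"
      using not_indep_MXY_insert_X x disjoint by blast+
  qed
  moreover have "indep N' {x1, x2}" using indep_N'[of "{x1, x2}"] B by blast
  ultimately show False by contradiction
qed

end

context double_relaxation
begin

lemma not_classR_MXY: "\<not> classR MXY"
proof
  assume "classR MXY"
  then obtain N' H where N': "matroid N'" "binary N'" "circuit_hyperplane N' H" and eq: "MXY = relax N' H"
    using not_binary_MXY unfolding classR_def by blast
  have "circuit N' H" using N'(3) unfolding circuit_hyperplane_def by (rule conjunct1)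
  then have "\<not> indep N' H" unfolding circuit_def by (rule conjunct1[OF conjunct2])
  then have "H \<notin> bases N'" using basis_indep by blast
  moreover have bases_eq: "bases MXY = insert H (bases N')" unfolding eq by (rule bases_relax)
  ultimately have bases: "bases N' = bases MXY - {H}" by auto
  have "gnd MXY = gnd N'" unfolding eq by (rule gnd_relax)
  then have gnd: "gnd N' = gnd N" by simp
  show False
  proof (cases "H = Y \<or> (H \<in> bases N \<and> 2 \<le> card (Y - H))")
    case True
    then show False using not_binary_relaxation[OF bases gnd] N'(2) by blast
  next
    case False
    have "H \<in> bases MXY" using bases_eq by simp
    then have "H = X \<or> H \<in> bases N" using False unfolding bases_MXY by blast
    moreover have "2 \<le> card (X - H)" if "H \<in> bases N"
      using that False card_Diff_basis[OF that] card_X_ge_3 by linarith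
    ultimately have "H = X \<or> (H \<in> bases N \<and> 2 \<le> card (X - H))" by blast
    moreover have "bases N' = bases swapped.MXY - {H}" using bases by (simp only: MXY_swap)
    ultimately show False using swapped.not_binary_relaxation gnd N'(2) by blast
  qed
qed

end

section \<open>Proper minors\<close>

context double_relaxation
begin

lemma representable_contract_XY:
  assumes K: "K \<in> {X, Y}" and T: "T \<subseteq> gnd N - K"
  shows "gf2_representable T (\<lambda>I. indep MXY (I \<union> K))"
proof -
  have finT: "finite T" using T finite_gnd finite_subset by blast
  have "I = {} \<longleftrightarrow> indep MXY (I \<union> K)" if I: "I \<subseteq> T" for I
  proof
    assume "I = {}"
    then show "indep MXY (I \<union> K)" using K indep_MXY_iff by auto
  next
    assume "indep MXY (I \<union> K)"
    then have "card (I \<union> K) \<le> card K" using card_indep_MXY XY_card[OF K] by simp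
    moreover have "finite I" using I finT finite_subset by blast
    moreover have "card (I \<union> K) = card I + card K"
      using I T \<open>finite I\<close> XY_subset[OF K] finite_gnd finite_subset by (intro card_Un_disjoint) auto
    ultimately show "I = {}" by simp
  qed
  then show ?thesis by (rule gf2_representable_cong[OF gf2_representable_empty_only[OF finT]])
qed

lemma representable_contract_N:
  assumes K: "indep N K" and T: "T \<subseteq> gnd N - K"
  shows "gf2_representable T (\<lambda>I. indep N (I \<union> K))"
proof -
  have "gf2_representable (gnd N) (indep N)"
    using binary_N unfolding binary_iff_gf2_representable .
  then have "gf2_representable (gnd N - K) (\<lambda>I. indep N (I \<union> K))"
    using gf2_representable_contract finite_gnd indep_subset_gnd[OF matroid_N K] K by blast
  then show ?thesis using gf2_representable_mono T by blast
qed

lemma representable_contract_avoiding_XY: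
  assumes K: "indep N K" and T: "T \<subseteq> gnd N - K"
    and avoid: "\<And>I. I \<subseteq> T \<Longrightarrow> I \<union> K \<notin> {X, Y}"
  shows "gf2_representable T (\<lambda>I. indep MXY (I \<union> K))"
  using representable_contract_N[OF K T]
  by (rule gf2_representable_cong) (use avoid indep_MXY_iff in blast)

lemma contraction_cases:
  assumes K: "indep MXY K" and T: "T \<subseteq> gnd N - K"
  obtains "gf2_representable T (\<lambda>I. indep MXY (I \<union> K))"
    | P where "P \<in> {X, Y}" "K \<subset> P" "P \<subseteq> K \<union> T"
proof (cases "K \<in> {X, Y}")
  case True
  then show ?thesis using that(1) representable_contract_XY T by blast
next
  case False
  then have "indep N K" using K indep_MXY_iff by blast
  show ?thesis
  proof (cases "\<exists>P\<in>{X, Y}. K \<subset> P \<and> P \<subseteq> K \<union> T")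
    case True
    then show ?thesis using that(2) by blast
  next
    case False
    have "I \<union> K \<notin> {X, Y}" if "I \<subseteq> T" for I
      using False \<open>K \<notin> {X, Y}\<close> that by blast
    then show ?thesis using that(1) representable_contract_avoiding_XY[OF \<open>indep N K\<close> T] by blast
  qed
qed

lemma indep_MXY_Un_iff:
  assumes P: "P \<in> {X, Y}" and K: "K \<subset> P" "P \<subseteq> K \<union> S"
    and S: "S \<subseteq> gnd N - K" "S \<noteq> gnd N" and I: "I \<subseteq> S"
  shows "indep MXY (I \<union> K) \<longleftrightarrow> indep N (I \<union> K) \<or> I = P - K"
proof -
  have "I \<union> K = P \<longleftrightarrow> I = P - K" using I S(1) K(1) by blast
  moreover have "I \<union> K \<noteq> gnd N - P"
  proof
    assume eq: "I \<union> K = gnd N - P"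
    then have "K = {}" using K(1) by blast
    then have "gnd N \<subseteq> S" using eq I K(2) by blast
    then show False using S by blast
  qed
  moreover have "I \<union> K \<in> {X, Y} \<longleftrightarrow> I \<union> K = P \<or> I \<union> K = gnd N - P"
    using XY_complement[OF P] P gnd_minus_X swapped.gnd_minus_X by blast
  ultimately show ?thesis using indep_MXY_iff by auto
qed

lemma circuit_hyperplane_contraction:
  assumes P: "P \<in> {X, Y}" and K: "K \<subset> P" "P \<subseteq> K \<union> S"
    and S: "S \<subseteq> gnd N - K" "S \<noteq> P - K"
  shows "circuit_hyperplane (S, maximal_sets (\<lambda>I. I \<subseteq> S \<and> indep N (I \<union> K))) (P - K)"
    (is "circuit_hyperplane ?N' ?H")
proof -
  let ?F = "\<lambda>I. I \<subseteq> S \<and> indep N (I \<union> K)"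
  have indepK: "indep N K" using XY_proper_indep[OF P K(1)] .
  have fam: "indep_family S ?F" using indep_family_contract[OF matroid_N indepK] S(1) by blast
  have indep: "indep ?N' I \<longleftrightarrow> ?F I" for I using indep_family_indep_iff[OF fam] .
  have HS: "?H \<subseteq> S" using K(2) by blast
  have HK: "?H \<union> K = P" using K(1) by blast
  have finK: "finite K" using indep_finite[OF matroid_N indepK] .
  have card_Un: "card (J \<union> K) = card J + card K" if J: "J \<subseteq> S" for J
  proof (rule card_Un_disjoint)
    show "finite J" using J S(1) finite_gnd by (meson Diff_subset finite_subset subset_trans)
    show "J \<inter> K = {}" using J S(1) by blast
  qed (rule finK)
  show ?thesis
  proof (rule circuit_hyperplaneI)
    show "matroid ?N'" using matroid_maximal_sets[OF fam] .
    show "?H \<subseteq> gnd ?N'" "?H \<noteq> gnd ?N'" using HS S(2) by auto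
    show "\<not> indep ?N' ?H" using indep HK XY_dep[OF P] by simp
    show "indep ?N' (?H - {h})" if "h \<in> ?H" for h
    proof -
      have "(?H - {h}) \<union> K \<subset> P" using that K(1) by blast
      then show ?thesis using indep XY_proper_indep[OF P] HS by blast
    qed
    show "indep ?N' (insert w (?H - {h}))" if h: "h \<in> ?H" and w: "w \<in> gnd ?N' - ?H" for h w
    proof -
      have "w \<in> gnd N - P" using w S(1) by auto
      then have "insert w (P - {h}) \<in> bases N" using XY_exchange[OF P] h by blast
      moreover have "insert w (?H - {h}) \<union> K \<subseteq> insert w (P - {h})" using h K(1) by blast
      ultimately have "indep N (insert w (?H - {h}) \<union> K)" using basis_indep indep_subset by blast
      then show ?thesis using indep w h HS by auto
    qed
    show "card J \<le> card ?H" if "indep ?N' J" for J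
    proof -
      have J: "J \<subseteq> S" "indep N (J \<union> K)" using that indep by auto
      have "card (J \<union> K) \<le> card (?H \<union> K)"
        using card_indep_N[OF J(2)] HK XY_card[OF P] by simp
      then show ?thesis using card_Un[OF J(1)] card_Un[OF HS] by simp
    qed
  qed
qed

lemma classR_contraction_relaxation:
  assumes P: "P \<in> {X, Y}" and K: "K \<subset> P" "P \<subseteq> K \<union> S"
    and S: "S \<subseteq> gnd N - K" "S \<noteq> gnd N" "S \<noteq> P - K"
    and A: "gnd A = S" "bases A = maximal_sets (\<lambda>I. I \<subseteq> S \<and> indep MXY (I \<union> K))"
  shows "classR A"
proof -
  let ?F = "\<lambda>I. I \<subseteq> S \<and> indep N (I \<union> K)"
  let ?N' = "(S, maximal_sets ?F)" and ?H = "P - K"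
  have indepK: "indep N K" using XY_proper_indep[OF P K(1)] .
  have fam: "indep_family S ?F" using indep_family_contract[OF matroid_N indepK] S(1) by blast
  have CH: "circuit_hyperplane ?N' ?H" using circuit_hyperplane_contraction[OF P K S(1,3)] .
  have "I \<subseteq> S \<and> indep MXY (I \<union> K) \<longleftrightarrow> ?F I \<or> I = ?H" for I
  proof (cases "I \<subseteq> S")
    case True
    then show ?thesis using indep_MXY_Un_iff[OF P K S(1,2) True] by simp
  next
    case False
    then show ?thesis using K(2) by blast
  qed
  then have "bases A = maximal_sets (\<lambda>I. ?F I \<or> I = ?H)" using A(2) by presburger
  also have "\<dots> = insert ?H (maximal_sets ?F)" by (rule maximal_sets_insert_circuit_hyperplane[OF fam CH])
  finally have "A = relax ?N' ?H" using A(1) gnd_bases_collapse[of A] by (simp add: relax_def)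
  moreover have "binary ?N'"
  proof -
    have "gf2_representable S ?F"
      using representable_contract_N[OF indepK S(1)] by (rule gf2_representable_cong) simp
    then show ?thesis
      using binary_iff_representable_on[of ?N' ?F] indep_family_indep_iff[OF fam] by simp
  qed
  moreover have "matroid ?N'" using matroid_maximal_sets[OF fam] .
  ultimately show ?thesis unfolding classR_def using CH by blast
qed

text \<open>When deleting \<open>e\<close> leaves the exceptional configuration \<open>K \<subset> P \<subseteq> K \<union> (S - e)\<close>,
  contracting \<open>e\<close> destroys it: \<open>e\<close> lies on the other side \<open>gnd N - P\<close>.\<close>

lemma binary_contract_minor:
  assumes A: "matroid A" "gnd A = S" and indep_A: "\<And>I. indep A I \<longleftrightarrow> I \<subseteq> S \<and> indep MXY (I \<union> K)"
    and S: "S \<subseteq> gnd N - K" "S \<noteq> gnd N" and e: "e \<in> S"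
    and P: "P \<in> {X, Y}" "K \<subset> P" "P \<subseteq> K \<union> (S - {e})"
  shows "binary (contract A {e})"
proof -
  have eP: "e \<in> gnd N - P" using P(3) e S(1) by blast
  obtain x where x: "x \<in> P - K" using P(2) by blast
  have "insert e (P - {x}) \<in> bases N" using XY_exchange[OF P(1) _ eP] x by blast
  moreover have "insert e K \<subseteq> insert e (P - {x})" using P(2) x by blast
  ultimately have "indep N (insert e K)" using basis_indep indep_subset by blast
  then have indep_eK: "indep MXY (insert e K)" using indep_MXY_iff by simp
  have "indep A {e}" using indep_A e indep_eK by simp
  moreover have "{e} \<subseteq> gnd A" using e A(2) by simp
  ultimately have "indep (contract A {e}) I \<longleftrightarrow> I \<subseteq> S - {e} \<and> indep A (I \<union> {e})" for I
    using contract_indep_iff[OF A(1) _ indep_basis_restrict] A(2) by simp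
  then have indep_con: "indep (contract A {e}) I \<longleftrightarrow> indep MXY (I \<union> insert e K)"
    if "I \<subseteq> S - {e}" for I
    using that e indep_A by auto
  have T: "S - {e} \<subseteq> gnd N - insert e K" using S(1) by blast
  show ?thesis
  proof (cases rule: contraction_cases[OF indep_eK T])
    case 1
    show ?thesis by (rule binaryI[OF _ 1]) (simp_all add: indep_con A(2))
  next
    case (2 P')
    have "e \<in> P'" using 2(2) by blast
    then have "P' \<noteq> P" using eP by blast
    then have P': "P' = gnd N - P" using XY_complement[OF P(1) 2(1)] by blast
    then have "K = {}" using 2(2) P(2) by blast
    then have "P \<subseteq> S" "P' \<subseteq> S" using P(3) 2(3) e by blast+
    then have "gnd N \<subseteq> S" using P' by blast
    then show ?thesis using S by blast
  qed
qed

lemma proper_minor_classZ: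
  assumes C: "C \<subseteq> gnd N" and K: "K \<in> bases (restrict MXY C)"
    and S: "S \<subseteq> gnd N - C" "S \<noteq> gnd N"
  shows "classZ (restrict (contract MXY C) S)"
  unfolding classZ_def
proof
  let ?A = "restrict (contract MXY C) S"
  have A: "matroid ?A" using matroid_minor[OF matroid_MXY] C S(1) by simp
  have indep_A: "indep ?A I \<longleftrightarrow> I \<subseteq> S \<and> indep MXY (I \<union> K)" for I
    using minor_indep_iff[OF matroid_MXY _ K] C S(1) by simp
  have indepK: "indep MXY K" using basis_restrict_indep[OF K] .
  have SK: "S \<subseteq> gnd N - K" using S(1) basis_restrict_subset[OF K] by blast
  fix e assume "e \<in> gnd ?A"
  then have e: "e \<in> S" by simp
  have T: "S - {e} \<subseteq> gnd N - K" using SK by blast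
  show "binary (delete ?A e) \<or> binary (contract ?A {e})"
  proof (cases rule: contraction_cases[OF indepK T])
    case 1
    have "binary (delete ?A e)"
      by (rule binaryI[OF _ 1]) (auto simp: delete_indep_iff[OF A] indep_A)
    then show ?thesis ..
  next
    case 2
    have "binary (contract ?A {e})"
      using binary_contract_minor[OF A _ indep_A SK S(2) e 2] by simp
    then show ?thesis ..
  qed
qed

lemma proper_minor_classR:
  assumes C: "C \<subseteq> gnd N" and K: "K \<in> bases (restrict MXY C)"
    and S: "S \<subseteq> gnd N - C" "S \<noteq> gnd N"
  shows "classR (restrict (contract MXY C) S)"
proof -
  let ?A = "restrict (contract MXY C) S"
  have indep_A: "indep ?A I \<longleftrightarrow> I \<subseteq> S \<and> indep MXY (I \<union> K)" for I
    using minor_indep_iff[OF matroid_MXY _ K] C S(1) by simp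
  have KC: "K \<subseteq> C" and indepK: "indep MXY K"
    using basis_restrict_subset[OF K] basis_restrict_indep[OF K] by blast+
  have T: "S \<subseteq> gnd N - K" using S(1) KC by blast
  show ?thesis
  proof (cases rule: contraction_cases[OF indepK T])
    case 1
    have "binary ?A" by (rule binaryI[OF _ 1]) (simp_all add: indep_A)
    then show ?thesis unfolding classR_def ..
  next
    case (2 P)
    show ?thesis
    proof (cases "S = P - K")
      case True
      have "indep MXY (I \<union> K)" if "I \<subseteq> S" for I
      proof (cases "I \<union> K = P")
        case True
        then show ?thesis using 2(1) indep_MXY_iff by blast
      next
        case False
        then have "I \<union> K \<subset> P" using that \<open>S = P - K\<close> 2(2) by blast
        then show ?thesis using XY_proper_indep[OF 2(1)] indep_MXY_iff by blast
      qed
      moreover have "finite S" using finite_gnd S(1) finite_subset by blast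
      ultimately have "binary ?A"
        by (intro binaryI[OF _ gf2_representable_free]) (auto simp: indep_A)
      then show ?thesis unfolding classR_def ..
    next
      case False
      have "I \<subseteq> S \<and> indep (contract MXY C) I \<longleftrightarrow> I \<subseteq> S \<and> indep MXY (I \<union> K)" for I
        using contract_indep_iff[OF matroid_MXY _ K, of I] C S(1) by auto
      then have "bases ?A = maximal_sets (\<lambda>I. I \<subseteq> S \<and> indep MXY (I \<union> K))"
        unfolding bases_restrict by (simp only:)
      then show ?thesis using classR_contraction_relaxation[OF 2 T S(2) False] by simp
    qed
  qed
qed

end

theorem lemma2p9:
  fixes M :: "'a matroid"
  assumes "classD M"
  shows "excluded_minor classZ M \<and> excluded_minor classR M"
proof -
  obtain N X Y where "double_relaxation N X Y" and M: "M = relax (relax N X) Y"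
    using assms unfolding classD_def double_relaxation_def by blast
  then interpret double_relaxation N X Y by simp
  have M_eq: "M = MXY" unfolding M MXY_def ..
  have minors: "classZ A \<and> classR A" if minor: "proper_minor A MXY" for A
  proof -
    obtain C D where C: "C \<subseteq> gnd N" and D: "D \<subseteq> gnd N" "C \<union> D \<noteq> {}"
      and A: "A = restrict (contract MXY C) (gnd N - C - D)"
      using minor unfolding proper_minor_def by auto
    obtain K where K: "K \<in> bases (restrict MXY C)"
      using matroid_bases_nonempty[OF matroid_restrict[OF matroid_MXY]] C by auto
    have S: "gnd N - C - D \<subseteq> gnd N - C" "gnd N - C - D \<noteq> gnd N" using C D by blast+
    show ?thesis unfolding A using proper_minor_classZ[OF C K S] proper_minor_classR[OF C K S] ..
  qed
  show ?thesis
    unfolding M_eq excluded_minor_def using matroid_MXY not_classZ_MXY not_classR_MXY minors by blast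
qed

end
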